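(* Let $E\subset\mathbb{R}^N$ be convex. Then for every $h>0$ and every $c\in\mathbb{R}$, the set \[ T_{c,h}(E):=\Big\{x\in\mathbb{R}^N:\ P_h*(\chi_E-\chi_{\mathbb{R}^N\setminus E})(x)>c\,h^{\frac{s}{1+s}}\Big\} \] is convex.
   Context: Fix $N\ge1$, $s\in(0,1)$ and a norm $\mathcal N$ on $\mathbb{R}^N$ (convex, even, positively $1$-homogeneous, with $\underline c|x|\le\mathcal N(x)\le\overline c|x|$, $0<\underline c\le\overline c$). $P(x)=\frac{1}{1+\mathcal N(x)^{N+s}}$, $\sigma_h=h^{s/(1+s)}$, $P_h(x)=\sigma_h^{-N/s}P(x/\sigma_h^{1/s})$. *)

theory Defs
  imports "HOL-Analysis.Analysis"
begin

definition aniso_norm :: "('a::euclidean_space \<Rightarrow> real) \<Rightarrow> bool" where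
  "aniso_norm Nn \<longleftrightarrow> convex_on UNIV Nn \<and> (\<forall>x. Nn (- x) = Nn x)
     \<and> (\<forall>t x. t \<ge> 0 \<longrightarrow> Nn (t *\<^sub>R x) = t * Nn x)
     \<and> (\<exists>cl ch. 0 < cl \<and> cl \<le> ch \<and> (\<forall>x. cl * norm x \<le> Nn x \<and> Nn x \<le> ch * norm x))"

definition kerP :: "('a::euclidean_space \<Rightarrow> real) \<Rightarrow> real \<Rightarrow> 'a \<Rightarrow> real" where
  "kerP Nn s x = 1 / (1 + Nn x powr (real DIM('a) + s))"

definition sigma_h :: "real \<Rightarrow> real \<Rightarrow> real" where
  "sigma_h s h = h powr (s / (1 + s))"

definition kerPh :: "('a::euclidean_space \<Rightarrow> real) \<Rightarrow> real \<Rightarrow> real \<Rightarrow> 'a \<Rightarrow> real" where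
  "kerPh Nn s h x = sigma_h s h powr (- real DIM('a) / s)
      * kerP Nn s ((1 / sigma_h s h powr (1 / s)) *\<^sub>R x)"

definition conv :: "('a::euclidean_space \<Rightarrow> real) \<Rightarrow> ('a \<Rightarrow> real) \<Rightarrow> 'a \<Rightarrow> real" where
  "conv f g x = (\<integral>y. f (x - y) * g y \<partial>lborel)"

definition Tset :: "('a::euclidean_space \<Rightarrow> real) \<Rightarrow> real \<Rightarrow> real \<Rightarrow> real \<Rightarrow> 'a set \<Rightarrow> 'a set" where
  "Tset Nn s c h E = {x. conv (kerPh Nn s h) (\<lambda>y. indicator E y - indicator (UNIV - E) y) x
                          > c * h powr (s / (1 + s))}"

end

theory Submission
  imports Defs
begin

text \<open>Since \<open>\<chi>\<^sub>E - \<chi>\<^sub>(\<real>\<^sup>N \<setminus> E) = 2\<chi>\<^sub>E - 1\<close>, the convolution equals \<open>2u - \<parallel>P\<^sub>h\<parallel>\<^sub>1\<close> with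
  \<open>u(x) = \<integral> P\<^sub>h(z) \<chi>\<^sub>E(x - z) dz\<close>, so it suffices that \<open>u\<close> is quasi-concave.
  The kernel is \<open>(-1/N)\<close>-concave: \<open>P\<^sub>h\<^sup>-\<^sup>1\<^sup>/\<^sup>N\<close> is a multiple of \<open>(1 + (c \<N>(z))\<^sup>N\<^sup>+\<^sup>s)\<^sup>1\<^sup>/\<^sup>N\<close>,
  a convex nondecreasing function of the convex function \<open>\<N>\<close>. As \<open>E\<close> is convex,
  \<open>(x, z) \<mapsto> P\<^sub>h(z) \<chi>\<^sub>E(x - z)\<close> therefore satisfies the \<open>(-1/N)\<close>-power-mean inequality, and the
  Borell--Brascamp--Lieb inequality makes its marginal \<open>u\<close> quasi-concave. That inequality is proved
  by integrating out one coordinate at a time: each step lowers the exponent from \<open>-1/(k+1)\<close> to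
  \<open>-1/k\<close>, by the one-dimensional Brunn--Minkowski inequality for superlevel sets, which are
  intervals. For a non-measurable \<open>E\<close> the convolution is \<open>0\<close> everywhere.\<close>

(* For a, b > 0: c is at least the l-weighted power mean of a and b with exponent -1/k,
   where k = 0 stands for the exponent -\<infinity>, i.e. for min a b. *)
definition power_mean_le :: "nat \<Rightarrow> real \<Rightarrow> real \<Rightarrow> real \<Rightarrow> real \<Rightarrow> bool" where
  "power_mean_le k l a b c \<longleftrightarrow> (0 < a \<longrightarrow> 0 < b \<longrightarrow> 0 < c \<and>
     (if k = 0 then min a b \<le> c
      else c powr (-1 / real k) \<le> (1-l) * a powr (-1 / real k) + l * b powr (-1 / real k)))"

lemma convex_comb_pos:
  fixes l x y :: real
  assumes "0 \<le> l" "l \<le> 1" "x > 0" "y > 0"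
  shows "(1-l)*x + l*y > 0"
  using assms by (cases "l < 1") (auto intro: add_pos_nonneg)

definition power_mean :: "nat \<Rightarrow> real \<Rightarrow> real \<Rightarrow> real \<Rightarrow> real" where
  "power_mean k l a b = ((1-l) * a powr (-1 / real k) + l * b powr (-1 / real k)) powr (- real k)"

lemma power_mean_pos:
  assumes "0 \<le> l" "l \<le> 1" "a > 0" "b > 0"
  shows "power_mean k l a b > 0"
proof -
  have "(1-l) * a powr (-1 / real k) + l * b powr (-1 / real k) > 0"
    using assms by (intro convex_comb_pos) auto
  then show ?thesis unfolding power_mean_def by simp
qed

lemma convex_comb_strict_mono:
  fixes l x y x' y' :: real
  assumes "0 \<le> l" "l \<le> 1" "x < x'" "y < y'"
  shows "(1-l)*x + l*y < (1-l)*x' + l*y'"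
proof (cases "l < 1")
  case True
  then have "(1-l)*x < (1-l)*x'" using assms by simp
  moreover have "l*y \<le> l*y'" using assms by (intro mult_left_mono) auto
  ultimately show ?thesis by simp
qed (use assms in simp)

lemma power_mean_le_min:
  assumes "power_mean_le k l a b c" "0 \<le> l" "l \<le> 1" "0 \<le> a" "0 \<le> b" "0 \<le> c"
  shows "min a b \<le> c"
proof (cases "a > 0 \<and> b > 0 \<and> k \<noteq> 0")
  case True
  define e where "e = -1 / real k"
  have e: "e < 0" using True by (simp add: e_def)
  have c: "c > 0" and ci: "c powr e \<le> (1-l) * a powr e + l * b powr e"
    using assms True by (auto simp: power_mean_le_def e_def)
  have "a powr e \<le> (min a b) powr e" "b powr e \<le> (min a b) powr e"
    using True e by (auto intro!: powr_mono2' simp: min_def)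
  then have "(1-l) * a powr e + l * b powr e \<le> (1-l) * (min a b) powr e + l * (min a b) powr e"
    using assms by (intro add_mono mult_left_mono) auto
  also have "\<dots> = (min a b) powr e" by (simp add: algebra_simps)
  finally have "c powr e \<le> (min a b) powr e" using ci by linarith
  then show ?thesis using e c True by (smt (verit) powr_less_mono2_neg)
qed (use assms in \<open>auto simp: power_mean_le_def\<close>)

lemma min_le_harmonic_ratio:
  fixes l a b A B :: real
  assumes l: "0 \<le> l" "l \<le> 1" and pos: "a > 0" "b > 0" "A > 0" "B > 0"
  shows "min A B \<le> ((1-l) * (A/a) + l * (B/b)) / ((1-l)/a + l/b)"
proof -
  have "min A B * ((1-l)/a + l/b) = (1-l)*(min A B/a) + l*(min A B/b)" by (simp add: field_simps)
  also have "\<dots> \<le> (1-l) * (A/a) + l * (B/b)"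
    using l pos by (intro add_mono mult_left_mono divide_right_mono) auto
  moreover have "(1-l)/a + l/b > 0" using convex_comb_pos[OF l, of "1/a" "1/b"] pos by simp
  ultimately show ?thesis by (simp add: le_divide_eq)
qed

lemma weighted_ratio_powr:
  fixes A a e' q :: real
  assumes "A > 0" "a > 0" "1 - q = e" "e' * q = e"
  shows "(A/a) * (a powr e' / (A/a)) powr q = A powr e"
proof -
  have "(A/a) * (a powr e' / (A/a)) powr q = (A/a) * ((a powr e') powr q / (A/a) powr q)"
    using assms by (subst powr_divide) auto
  also have "\<dots> = a powr (e' * q) * ((A/a) powr 1 / (A/a) powr q)"
    using assms by (simp add: powr_powr)
  also have "(A/a) powr 1 / (A/a) powr q = (A/a) powr (1 - q)"
    using assms(1,2) by (simp add: powr_diff)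
  also have "a powr (e' * q) * (A/a) powr (1 - q) = a powr e * (A powr e / a powr e)"
    using assms by (simp add: powr_divide)
  also have "\<dots> = A powr e" using assms by simp
  finally show ?thesis .
qed

text \<open>A H\<ouml>lder-type inequality: it is the convexity of \<open>t \<mapsto> t powr ((k+1)/k)\<close>,
  applied with weights proportional to \<open>(1-l)*A/a\<close> and \<open>l*B/b\<close>.\<close>
lemma powr_ratio_mean_le:
  fixes k :: nat and l a b A B :: real
  assumes k: "k > 0" and l: "0 \<le> l" "l \<le> 1" and pos: "a > 0" "b > 0" "A > 0" "B > 0"
  defines "e \<equiv> -1 / real k" and "e' \<equiv> -1 / real (Suc k)"
  defines "S \<equiv> (1-l) * a powr e' + l * b powr e'" and "U \<equiv> (1-l) * (A/a) + l * (B/b)"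
  shows "(power_mean (Suc k) l a b * U) powr e \<le> (1-l) * A powr e + l * B powr e"
proof -
  define q where "q = real (Suc k) / real k"
  have Spos: "S > 0" unfolding S_def using l pos by (intro convex_comb_pos) auto
  have Upos: "U > 0" unfolding U_def using l pos by (intro convex_comb_pos) auto
  have qe: "1 - q = e" "e' * q = e" "- real (Suc k) * e = q"
    using k unfolding q_def e_def e'_def by (auto simp: field_simps)
  define th where "th = l * (B/b) / U"
  have "1 - th = (U - l*(B/b))/U" using Upos by (simp add: th_def field_simps)
  also have "U - l*(B/b) = (1-l)*(A/a)" unfolding U_def by simp
  finally have th3: "1 - th = (1-l) * (A/a) / U" .
  have th0: "0 \<le> th" unfolding th_def using l pos Upos by simp
  have "0 \<le> (1-l) * (A/a) / U" using l pos Upos by simp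
  then have th: "0 \<le> th" "th \<le> 1" using th0 th3 by linarith+
  define t0 where "t0 = a powr e' / (A/a)"
  define t1 where "t1 = b powr e' / (B/b)"
  have t: "t0 > 0" "t1 > 0" using pos unfolding t0_def t1_def by auto
  have SU: "S / U = (1-th)*t0 + th*t1"
    using pos Upos unfolding th3 unfolding th_def t0_def t1_def S_def by (simp add: field_simps)
  have "power_mean (Suc k) l a b = S powr (- real (Suc k))"
    by (simp only: power_mean_def S_def e'_def)
  then have "(power_mean (Suc k) l a b * U) powr e = S powr q * U powr e"
    using Spos Upos qe by (simp add: powr_mult powr_powr)
  also have "\<dots> = U * (S/U) powr q"
  proof -
    have "U powr 1 / U powr q = U powr e"
      using Upos qe powr_diff[of U 1 q] by (simp del: powr_one_gt_zero_iff)
    moreover have "U * (S/U) powr q = S powr q * (U powr 1 / U powr q)"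
      using Spos Upos by (simp add: powr_divide)
    ultimately show ?thesis by simp
  qed
  also have "\<dots> \<le> U * ((1-th) * t0 powr q + th * t1 powr q)"
    unfolding SU using convex_onD[OF powr_convex, of q th t0 t1] k t th Upos
    by (intro mult_left_mono) (auto simp: q_def)
  also have "\<dots> = (1-l) * ((A/a) * t0 powr q) + l * ((B/b) * t1 powr q)"
  proof -
    have u: "U * (1-th) = (1-l) * (A/a)" "U * th = l * (B/b)" using th3 Upos by (auto simp: th_def)
    have "U * ((1-th) * t0 powr q + th * t1 powr q) = (U * (1-th)) * t0 powr q + (U * th) * t1 powr q"
      by (simp add: algebra_simps)
    then show ?thesis unfolding u by simp
  qed
  also have "\<dots> = (1-l) * A powr e + l * B powr e"
    unfolding t0_def t1_def using weighted_ratio_powr[OF _ _ qe(1,2)] pos by simp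
  finally show ?thesis .
qed

lemma power_mean_le_of_ratio_bound:
  fixes k :: nat and l a b A B H :: real
  assumes l: "0 \<le> l" "l \<le> 1" and pos: "a > 0" "b > 0" "A > 0" "B > 0"
    and H: "H \<ge> power_mean (Suc k) l a b * ((1-l) * (A/a) + l * (B/b))"
  shows "power_mean_le k l A B H"
proof -
  define m where "m = power_mean (Suc k) l a b"
  define U where "U = (1-l) * (A/a) + l * (B/b)"
  have Upos: "U > 0" unfolding U_def using l pos by (intro convex_comb_pos) auto
  have mpos: "m > 0" unfolding m_def using l pos by (intro power_mean_pos) auto
  have "m * U > 0" using mpos Upos by simp
  then have Hpos: "H > 0" using H unfolding m_def U_def by linarith
  show ?thesis
  proof (cases "k = 0")
    case True
    have "power_mean (Suc 0) l a b = 1 / ((1-l)/a + l/b)" unfolding power_mean_def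
      using pos l convex_comb_pos[of l "inverse a" "inverse b"]
      by (simp add: powr_minus_divide divide_inverse powr_minus)
    then have "m = 1 / ((1-l)/a + l/b)" using True by (simp add: m_def)
    then have "min A B \<le> m * U"
      using min_le_harmonic_ratio[OF l pos] unfolding U_def by simp
    then show ?thesis using True H Hpos by (auto simp: power_mean_le_def U_def m_def)
  next
    case False
    have "H powr (-1 / real k) \<le> (m * U) powr (-1 / real k)"
      using H Hpos mpos Upos False unfolding U_def m_def by (intro powr_mono2') auto
    also have "\<dots> \<le> (1-l) * A powr (-1 / real k) + l * B powr (-1 / real k)"
      using powr_ratio_mean_le[OF _ l pos, of k] False unfolding m_def U_def by simp
    finally show ?thesis using False Hpos by (auto simp: power_mean_le_def)
  qed
qed

lemma exists_diff_ge_of_less_measure: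
  fixes A :: "real set" and x :: real
  assumes "A \<noteq> {}" "x < measure lborel A" "emeasure lborel A < \<infinity>"
  shows "\<exists>a0\<in>A. \<exists>a1\<in>A. a0 \<le> a1 \<and> x \<le> a1 - a0"
proof (rule ccontr)
  assume "\<not> ?thesis"
  then have diff: "\<And>a0 a1. a0 \<in> A \<Longrightarrow> a1 \<in> A \<Longrightarrow> a1 < a0 + x"
    by (smt (verit))
  obtain a where a: "a \<in> A" using assms by auto
  have bdd: "bdd_above A" "bdd_below A"
  proof -
    show "bdd_above A" unfolding bdd_above_def using diff[OF a] by (metis less_eq_real_def)
    have "\<forall>a0\<in>A. a - x \<le> a0" using diff[OF _ a] by (simp add: algebra_simps less_imp_le)
    then show "bdd_below A" unfolding bdd_below_def by blast
  qed
  have sub: "A \<subseteq> {Inf A..Sup A}" using bdd by (auto intro: cSup_upper cInf_lower)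
  have "Sup A \<le> a0 + x" if "a0 \<in> A" for a0
    using assms(1) diff[OF that] by (intro cSup_least) (auto simp: less_imp_le)
  then have gap: "Sup A - x \<le> Inf A" using assms(1) by (intro cInf_greatest) (auto simp: algebra_simps)
  have "emeasure lborel A \<le> emeasure lborel {Inf A..Sup A}" by (rule emeasure_mono[OF sub]) auto
  also have "\<dots> = ennreal (Sup A - Inf A)" using sub a by auto
  finally have "ennreal (measure lborel A) \<le> ennreal (Sup A - Inf A)"
    using assms(3) by (simp add: emeasure_eq_ennreal_measure)
  then have "measure lborel A \<le> Sup A - Inf A"
    using sub a by (subst (asm) ennreal_le_iff) auto
  then show False using gap assms(2) by linarith
qed

lemma convex_comb_between:
  fixes l a0 a1 b0 b1 w :: real
  assumes "0 \<le> l" "l \<le> 1" "a0 \<le> a1" "b0 \<le> b1"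
    and "(1-l)*a0 + l*b0 \<le> w" "w \<le> (1-l)*a1 + l*b1"
  shows "\<exists>th. 0 \<le> th \<and> th \<le> 1 \<and> w = (1-l)*((1-th)*a0 + th*a1) + l*((1-th)*b0 + th*b1)"
proof -
  define d where "d = (1-l)*(a1-a0) + l*(b1-b0)"
  have d0: "d \<ge> 0" unfolding d_def using assms by simp
  show ?thesis
  proof (cases "d = 0")
    case True
    then have "w = (1-l)*a0 + l*b0" using assms unfolding d_def by (simp add: algebra_simps)
    then show ?thesis by (intro exI[of _ 0]) simp
  next
    case False
    define th where "th = (w - ((1-l)*a0 + l*b0)) / d"
    have "th \<le> 1" unfolding th_def using False d0 assms by (simp add: divide_le_eq_1 d_def algebra_simps)
    moreover have "th \<ge> 0" unfolding th_def using d0 assms by simp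
    moreover have "(1-l)*((1-th)*a0 + th*a1) + l*((1-th)*b0 + th*b1) = ((1-l)*a0 + l*b0) + th * d"
      unfolding d_def by (simp add: algebra_simps)
    moreover have "th * d = w - ((1-l)*a0 + l*b0)" unfolding th_def using False by simp
    ultimately show ?thesis by (intro exI[of _ th]) simp
  qed
qed

text \<open>For convex sets, i.e. intervals, this reduces to comparing lengths: nearly extremal points
  of \<open>A\<close> and \<open>B\<close> span, under the convex combination, an interval contained in \<open>C\<close>.\<close>
lemma brunn_minkowski_convex_real:
  fixes A B C :: "real set" and l :: real
  assumes l: "0 \<le> l" "l \<le> 1"
    and ne: "A \<noteq> {}" "B \<noteq> {}" and cv: "convex A" "convex B"
    and fin: "emeasure lborel A < \<infinity>" "emeasure lborel B < \<infinity>" "emeasure lborel C < \<infinity>"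
    and C: "C \<in> sets lborel"
    and mix: "\<And>a b. a \<in> A \<Longrightarrow> b \<in> B \<Longrightarrow> (1-l)*a + l*b \<in> C"
  shows "(1-l) * measure lborel A + l * measure lborel B \<le> measure lborel C"
proof (rule field_le_epsilon)
  fix e :: real assume e: "e > 0"
  obtain a0 a1 where a: "a0 \<in> A" "a1 \<in> A" "a0 \<le> a1" "measure lborel A - e \<le> a1 - a0"
    using exists_diff_ge_of_less_measure[OF ne(1) _ fin(1), of "measure lborel A - e"] e by auto
  obtain b0 b1 where b: "b0 \<in> B" "b1 \<in> B" "b0 \<le> b1" "measure lborel B - e \<le> b1 - b0"
    using exists_diff_ge_of_less_measure[OF ne(2) _ fin(2), of "measure lborel B - e"] e by auto
  define w0 where "w0 = (1-l)*a0 + l*b0"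
  define w1 where "w1 = (1-l)*a1 + l*b1"
  have sub: "{w0..w1} \<subseteq> C"
  proof
    fix w assume "w \<in> {w0..w1}"
    then obtain th where th: "0 \<le> th" "th \<le> 1"
      "w = (1-l)*((1-th)*a0 + th*a1) + l*((1-th)*b0 + th*b1)"
      using convex_comb_between[OF l a(3) b(3)] unfolding w0_def w1_def by auto
    have "(1-th)*a0 + th*a1 \<in> A" using convexD_alt[OF cv(1) a(1,2) th(1,2)] by (simp add: algebra_simps)
    moreover have "(1-th)*b0 + th*b1 \<in> B" using convexD_alt[OF cv(2) b(1,2) th(1,2)] by (simp add: algebra_simps)
    ultimately show "w \<in> C" using mix th(3) by simp
  qed
  have w01: "w0 \<le> w1" unfolding w0_def w1_def using a(3) b(3) l
    by (intro add_mono mult_left_mono) auto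
  have "ennreal (w1 - w0) \<le> emeasure lborel C"
    using emeasure_mono[OF sub C] w01 by simp
  then have "w1 - w0 \<le> measure lborel C"
    using fin(3) w01 by (simp add: emeasure_eq_ennreal_measure)
  moreover have "(1-l) * (measure lborel A - e) + l * (measure lborel B - e) \<le> w1 - w0"
    using a(4) b(4) l mult_left_mono[OF a(4), of "1-l"] mult_left_mono[OF b(4), of l]
    unfolding w0_def w1_def by (simp add: algebra_simps)
  ultimately show "(1-l) * measure lborel A + l * measure lborel B \<le> measure lborel C + e"
    by (simp add: algebra_simps)
qed

lemma nn_integral_min_layer_cake:
  fixes f :: "real \<Rightarrow> real"
  assumes [measurable]: "f \<in> borel_measurable lborel" and c: "c > 0" and nn: "\<And>t. f t \<ge> 0"
  shows "(\<integral>\<^sup>+t. ennreal (min c (f t)) \<partial>lborel) =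
     ennreal c * (\<integral>\<^sup>+r. indicator {0<..<1} r * emeasure lborel {t. r * c < f t} \<partial>lborel)"
proof -
  let ?I = "\<lambda>t r. if 0 < r \<and> r < 1 \<and> r * c < f t then 1 else 0 :: ennreal"
  have layer: "(\<integral>\<^sup>+r. ?I t r \<partial>lborel) = ennreal (min 1 (f t / c))" for t
  proof -
    have "?I t = indicator {0<..<min 1 (f t / c)}"
      using c by (auto simp: fun_eq_iff indicator_def field_simps)
    then show ?thesis using c nn[of t] by simp
  qed
  have "(\<integral>\<^sup>+t. ennreal (min c (f t)) \<partial>lborel) = (\<integral>\<^sup>+t. ennreal c * (\<integral>\<^sup>+r. ?I t r \<partial>lborel) \<partial>lborel)"
  proof (rule nn_integral_cong)
    fix t
    have "c * min 1 (f t / c) = min c (f t)" using c by (simp add: min_def field_simps)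
    then show "ennreal (min c (f t)) = ennreal c * (\<integral>\<^sup>+r. ?I t r \<partial>lborel)"
      unfolding layer using c nn[of t] by (simp add: ennreal_mult[symmetric])
  qed
  also have "\<dots> = ennreal c * (\<integral>\<^sup>+t. (\<integral>\<^sup>+r. ?I t r \<partial>lborel) \<partial>lborel)"
    by (rule nn_integral_cmult) measurable
  also have "(\<integral>\<^sup>+t. (\<integral>\<^sup>+r. ?I t r \<partial>lborel) \<partial>lborel) = (\<integral>\<^sup>+r. (\<integral>\<^sup>+t. ?I t r \<partial>lborel) \<partial>lborel)"
    by (rule lborel_pair.Fubini'[symmetric]) measurable
  also have "\<dots> = (\<integral>\<^sup>+r. indicator {0<..<1} r * emeasure lborel {t. r * c < f t} \<partial>lborel)"
  proof (rule nn_integral_cong)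
    fix r :: real
    have "?I t r = indicator {0<..<1} r * indicator {t. r * c < f t} t" for t
      by (simp add: indicator_def)
    moreover have "{t. r * c < f t} \<in> sets lborel" by measurable
    ultimately show "(\<integral>\<^sup>+t. ?I t r \<partial>lborel) = indicator {0<..<1} r * emeasure lborel {t. r * c < f t}"
      by (simp add: nn_integral_cmult_indicator)
  qed
  finally show ?thesis .
qed

lemma emeasure_superlevel_finite:
  fixes f :: "real \<Rightarrow> real"
  assumes [measurable]: "f \<in> borel_measurable lborel" and c: "c > 0"
    and fin: "(\<integral>\<^sup>+t. ennreal (f t) \<partial>lborel) < \<infinity>"
  shows "emeasure lborel {t. c < f t} < \<infinity>"
proof -
  have "ennreal c * emeasure lborel {t. c < f t} = (\<integral>\<^sup>+t. ennreal c * indicator {t. c < f t} t \<partial>lborel)"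
    by (subst nn_integral_cmult_indicator) auto
  also have "\<dots> \<le> (\<integral>\<^sup>+t. ennreal (f t) \<partial>lborel)"
    by (intro nn_integral_mono) (auto simp: indicator_def intro!: ennreal_leI dest: less_imp_le)
  finally have "ennreal c * emeasure lborel {t. c < f t} < \<infinity>" using fin by (simp add: le_less_trans)
  then have "emeasure lborel {t. c < f t} = 0 \<or> emeasure lborel {t. c < f t} < \<infinity>"
    using c by (simp add: ennreal_mult_less_top)
  then show ?thesis by (metis ennreal_zero_less_top infinity_ennreal_def)
qed

lemma convex_superlevel:
  fixes f :: "'a::real_vector \<Rightarrow> real"
  assumes "\<And>x y u. 0 \<le> u \<Longrightarrow> u \<le> 1 \<Longrightarrow> min (f x) (f y) \<le> f ((1-u) *\<^sub>R x + u *\<^sub>R y)"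
  shows "convex {x. c < f x}"
proof (rule convexI)
  fix x y :: 'a and u v :: real
  assume "x \<in> {x. c < f x}" "y \<in> {x. c < f x}" "0 \<le> u" "0 \<le> v" "u + v = 1"
  then have u: "u = 1 - v" "v \<le> 1" by auto
  from \<open>x \<in> _\<close> \<open>y \<in> _\<close> have "c < min (f x) (f y)" by simp
  also have "min (f x) (f y) \<le> f ((1 - v) *\<^sub>R x + v *\<^sub>R y)" using assms \<open>0 \<le> v\<close> u(2) .
  finally show "u *\<^sub>R x + v *\<^sub>R y \<in> {x. c < f x}" using u(1) by simp
qed

lemma Sup_range_pos:
  fixes g :: "real \<Rightarrow> real"
  assumes "\<And>t. g t \<ge> 0" "bdd_above (range g)" "(\<integral>\<^sup>+t. ennreal (g t) \<partial>lborel) \<noteq> 0"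
  shows "Sup (range g) > 0"
proof (rule ccontr)
  assume neg: "\<not> Sup (range g) > 0"
  have "g t = 0" for t
  proof -
    have "g t \<le> Sup (range g)" using assms(2) by (simp add: cSup_upper)
    then show ?thesis using neg assms(1)[of t] by linarith
  qed
  then show False using assms(3) by simp
qed

lemma ennreal_eq_div_of_eq_mult:
  assumes "x < \<infinity>" "x = ennreal a * y" "a > 0"
  shows "y = ennreal (enn2real x / a)"
proof -
  have "ennreal (enn2real x) = ennreal a * y" using assms by simp
  then have "y = ennreal (enn2real x) / ennreal a"
    using assms(3) mult_divide_eq_ennreal[of "ennreal a" y] by (simp add: mult.commute)
  then show ?thesis using assms(3) by (simp add: divide_ennreal)
qed

lemma power_mean_le_Suc_scaled:
  fixes k :: nat
  assumes l: "0 \<le> l" "l \<le> 1"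
    and hyp: "power_mean_le (Suc k) l x0 x1 y"
    and pos: "a > 0" "b > 0" "r > 0" and t: "r * a < x0" "r * b < x1"
  shows "r * power_mean (Suc k) l a b < y"
proof -
  define m where "m = power_mean (Suc k) l a b"
  define e where "e = -1 / real (Suc k)"
  define S where "S = (1-l) * a powr e + l * b powr e"
  have e0: "e < 0" unfolding e_def by simp
  have Spos: "S > 0" unfolding S_def using pos l by (intro convex_comb_pos) auto
  have m_S: "m = S powr (- real (Suc k))" unfolding m_def power_mean_def S_def e_def by simp
  have "- real (Suc k) * e = 1" unfolding e_def by (simp add: divide_simps)
  then have me: "m powr e = S" unfolding m_S using Spos by (simp add: powr_powr)
  have mpos: "m > 0" unfolding m_S using Spos by simp
  have "x0 > 0" "x1 > 0" using t pos by (auto intro: less_trans[OF mult_pos_pos])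
  then have ypos: "y > 0"
    and ymean: "y powr e \<le> (1-l) * x0 powr e + l * x1 powr e"
    using hyp unfolding power_mean_le_def e_def by auto
  have "(1-l) * x0 powr e + l * x1 powr e < (1-l) * (r*a) powr e + l * (r*b) powr e"
    using t pos e0 by (intro convex_comb_strict_mono l powr_less_mono2_neg) auto
  also have "\<dots> = r powr e * S"
    unfolding S_def using pos by (simp add: powr_mult algebra_simps)
  also have "\<dots> = (r * m) powr e" using pos mpos me by (simp add: powr_mult)
  finally have "y powr e < (r * m) powr e" using ymean by linarith
  then show ?thesis unfolding m_def[symmetric]
    using ypos e0 powr_mono2'[of e y "r * m"] by (meson not_le order.strict_iff_not)
qed

lemma superlevel_measure_convex_comb:
  fixes g0 g1 g :: "real \<Rightarrow> real" and k :: nat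
  assumes l: "0 \<le> l" "l \<le> 1"
    and hyp: "\<And>t0 t1. power_mean_le (Suc k) l (g0 t0) (g1 t1) (g ((1-l)*t0 + l*t1))"
    and pos: "a > 0" "b > 0" "r > 0"
    and meas[measurable]: "g0 \<in> borel_measurable lborel" "g1 \<in> borel_measurable lborel" "g \<in> borel_measurable lborel"
    and fin: "(\<integral>\<^sup>+t. ennreal (g0 t) \<partial>lborel) < \<infinity>" "(\<integral>\<^sup>+t. ennreal (g1 t) \<partial>lborel) < \<infinity>"
       "(\<integral>\<^sup>+t. ennreal (g t) \<partial>lborel) < \<infinity>"
    and qc0: "\<And>t t' u. 0 \<le> u \<Longrightarrow> u \<le> 1 \<Longrightarrow> min (g0 t) (g0 t') \<le> g0 ((1-u)*t + u*t')"
    and qc1: "\<And>t t' u. 0 \<le> u \<Longrightarrow> u \<le> 1 \<Longrightarrow> min (g1 t) (g1 t') \<le> g1 ((1-u)*t + u*t')"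
    and ne: "{t. r * a < g0 t} \<noteq> {}" "{t. r * b < g1 t} \<noteq> {}"
  shows "(1-l) * measure lborel {t. r * a < g0 t} + l * measure lborel {t. r * b < g1 t}
           \<le> measure lborel {t. r * power_mean (Suc k) l a b < g t}"
proof (rule brunn_minkowski_convex_real[OF l ne])
  have "power_mean (Suc k) l a b > 0" using pos l by (intro power_mean_pos) auto
  then show "emeasure lborel {t. r * power_mean (Suc k) l a b < g t} < \<infinity>"
    using pos by (intro emeasure_superlevel_finite fin) auto
  show "(1-l) * t0 + l * t1 \<in> {t. r * power_mean (Suc k) l a b < g t}"
    if "t0 \<in> {t. r * a < g0 t}" "t1 \<in> {t. r * b < g1 t}" for t0 t1
    using power_mean_le_Suc_scaled[OF l hyp[of t0 t1] pos] that by simp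
  show "emeasure lborel {t. r * a < g0 t} < \<infinity>" "emeasure lborel {t. r * b < g1 t} < \<infinity>"
    using pos by (intro emeasure_superlevel_finite fin meas; simp)+
qed (auto intro!: convex_superlevel simp: qc0 qc1)

lemma nn_integral_Sup_layer_cake:
  fixes g :: "real \<Rightarrow> real"
  assumes [measurable]: "g \<in> borel_measurable lborel" and nn: "\<And>t. g t \<ge> 0"
    and bdd: "bdd_above (range g)" and pos: "Sup (range g) > 0"
  shows "(\<integral>\<^sup>+t. ennreal (g t) \<partial>lborel) = ennreal (Sup (range g)) *
           (\<integral>\<^sup>+r. indicator {0<..<1} r * emeasure lborel {t. r * Sup (range g) < g t} \<partial>lborel)"
proof -
  have "(\<integral>\<^sup>+t. ennreal (g t) \<partial>lborel) = (\<integral>\<^sup>+t. ennreal (min (Sup (range g)) (g t)) \<partial>lborel)"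
    using bdd by (intro nn_integral_cong) (simp add: min_absorb2 cSup_upper)
  then show ?thesis using nn_integral_min_layer_cake[OF _ pos nn] by simp
qed

lemma layer_convex_comb:
  fixes g0 g1 g :: "real \<Rightarrow> real" and k :: nat
  assumes l: "0 \<le> l" "l \<le> 1"
    and hyp: "\<And>t0 t1. power_mean_le (Suc k) l (g0 t0) (g1 t1) (g ((1-l)*t0 + l*t1))"
    and meas[measurable]: "g0 \<in> borel_measurable lborel" "g1 \<in> borel_measurable lborel" "g \<in> borel_measurable lborel"
    and fin: "(\<integral>\<^sup>+t. ennreal (g0 t) \<partial>lborel) < \<infinity>" "(\<integral>\<^sup>+t. ennreal (g1 t) \<partial>lborel) < \<infinity>"
       "(\<integral>\<^sup>+t. ennreal (g t) \<partial>lborel) < \<infinity>"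
    and qc0: "\<And>t t' u. 0 \<le> u \<Longrightarrow> u \<le> 1 \<Longrightarrow> min (g0 t) (g0 t') \<le> g0 ((1-u)*t + u*t')"
    and qc1: "\<And>t t' u. 0 \<le> u \<Longrightarrow> u \<le> 1 \<Longrightarrow> min (g1 t) (g1 t') \<le> g1 ((1-u)*t + u*t')"
    and bdd: "bdd_above (range g0)" "bdd_above (range g1)"
    and a: "a = Sup (range g0)" "a > 0" and b: "b = Sup (range g1)" "b > 0"
  defines "m \<equiv> power_mean (Suc k) l a b"
  shows "ennreal (1-l) * (indicator {0<..<1} r * emeasure lborel {t. r * a < g0 t})
           + ennreal l * (indicator {0<..<1} r * emeasure lborel {t. r * b < g1 t})
         \<le> indicator {0<..<1} r * emeasure lborel {t. r * m < g t}"
proof (cases "0 < r \<and> r < 1")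
  case True
  have m: "m > 0" unfolding m_def using a b l by (intro power_mean_pos) auto
  have "r * a < a" "r * b < b" using True a b by auto
  then have ne: "{t. r * a < g0 t} \<noteq> {}" "{t. r * b < g1 t} \<noteq> {}"
    using bdd unfolding a b by (auto simp: less_cSup_iff)
  have "emeasure lborel {t. r * c < f t} = ennreal (measure lborel {t. r * c < f t})"
    if "c > 0" "f \<in> borel_measurable lborel" "(\<integral>\<^sup>+t. ennreal (f t) \<partial>lborel) < \<infinity>"
    for c :: real and f :: "real \<Rightarrow> real"
    using True that emeasure_superlevel_finite[OF that(2) _ that(3), of "r * c"]
    by (simp add: emeasure_eq_ennreal_measure)
  then have "emeasure lborel {t. r * a < g0 t} = ennreal (measure lborel {t. r * a < g0 t})"
    "emeasure lborel {t. r * b < g1 t} = ennreal (measure lborel {t. r * b < g1 t})"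
    "emeasure lborel {t. r * m < g t} = ennreal (measure lborel {t. r * m < g t})"
    using a b m fin by auto
  then show ?thesis
    using superlevel_measure_convex_comb[OF l hyp a(2) b(2) _ meas fin qc0 qc1 ne] True l
    unfolding m_def
    by (simp add: ennreal_mult[symmetric] ennreal_plus[symmetric] del: ennreal_plus)
qed simp

text \<open>By the layer cake formula each integral is its function's supremum times the integral
  of the measures of the superlevel sets at the proportional levels; these sets are intervals, to
  which the one-dimensional Brunn--Minkowski inequality applies.\<close>
lemma borell_brascamp_lieb_real:
  fixes g0 g1 g :: "real \<Rightarrow> real" and k :: nat and l :: real
  assumes l: "0 \<le> l" "l \<le> 1"
    and nn: "\<And>t. g0 t \<ge> 0" "\<And>t. g1 t \<ge> 0" "\<And>t. g t \<ge> 0"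
    and meas[measurable]: "g0 \<in> borel_measurable lborel" "g1 \<in> borel_measurable lborel" "g \<in> borel_measurable lborel"
    and bd: "\<And>t. g0 t \<le> B0" "\<And>t. g1 t \<le> B1"
    and fin: "(\<integral>\<^sup>+t. ennreal (g0 t) \<partial>lborel) < \<infinity>" "(\<integral>\<^sup>+t. ennreal (g1 t) \<partial>lborel) < \<infinity>"
       "(\<integral>\<^sup>+t. ennreal (g t) \<partial>lborel) < \<infinity>"
    and qc0: "\<And>t t' u. 0 \<le> u \<Longrightarrow> u \<le> 1 \<Longrightarrow> min (g0 t) (g0 t') \<le> g0 ((1-u)*t + u*t')"
    and qc1: "\<And>t t' u. 0 \<le> u \<Longrightarrow> u \<le> 1 \<Longrightarrow> min (g1 t) (g1 t') \<le> g1 ((1-u)*t + u*t')"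
    and hyp: "\<And>t0 t1. power_mean_le (Suc k) l (g0 t0) (g1 t1) (g ((1-l)*t0 + l*t1))"
  shows "power_mean_le k l (enn2real (\<integral>\<^sup>+t. ennreal (g0 t) \<partial>lborel))
           (enn2real (\<integral>\<^sup>+t. ennreal (g1 t) \<partial>lborel)) (enn2real (\<integral>\<^sup>+t. ennreal (g t) \<partial>lborel))"
proof -
  define J0 where "J0 = (\<integral>\<^sup>+t. ennreal (g0 t) \<partial>lborel)"
  define J1 where "J1 = (\<integral>\<^sup>+t. ennreal (g1 t) \<partial>lborel)"
  define J where "J = (\<integral>\<^sup>+t. ennreal (g t) \<partial>lborel)"
  have "power_mean_le k l (enn2real J0) (enn2real J1) (enn2real J)"
    if I0: "enn2real J0 > 0" and I1: "enn2real J1 > 0"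
  proof -
    define a where "a = Sup (range g0)"
    define b where "b = Sup (range g1)"
    have bdd: "bdd_above (range g0)" "bdd_above (range g1)" using bd by (auto simp: bdd_above_def)
    have a: "a > 0" unfolding a_def using I0 by (intro Sup_range_pos nn bdd) (auto simp: J0_def)
    have b: "b > 0" unfolding b_def using I1 by (intro Sup_range_pos nn bdd) (auto simp: J1_def)
    define m where "m = power_mean (Suc k) l a b"
    define F0 where "F0 r = indicator {0<..<1} r * emeasure lborel {t. r * a < g0 t}" for r
    define F1 where "F1 r = indicator {0<..<1} r * emeasure lborel {t. r * b < g1 t}" for r
    define F where "F r = indicator {0<..<1} r * emeasure lborel {t. r * m < g t}" for r
    have m: "m > 0" unfolding m_def using a b l by (intro power_mean_pos) auto
    have "ennreal (1-l) * (\<integral>\<^sup>+r. F0 r \<partial>lborel) + ennreal l * (\<integral>\<^sup>+r. F1 r \<partial>lborel)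
        = (\<integral>\<^sup>+r. ennreal (1-l) * F0 r + ennreal l * F1 r \<partial>lborel)"
      by (simp add: F0_def F1_def nn_integral_add nn_integral_cmult)
    also have "\<dots> \<le> (\<integral>\<^sup>+r. F r \<partial>lborel)"
      unfolding F0_def F1_def F_def m_def
      by (intro nn_integral_mono layer_convex_comb[OF l hyp meas fin qc0 qc1 bdd a_def a b_def b])
    finally have "ennreal m * (ennreal (1-l) * (\<integral>\<^sup>+r. F0 r \<partial>lborel) + ennreal l * (\<integral>\<^sup>+r. F1 r \<partial>lborel))
        \<le> ennreal m * (\<integral>\<^sup>+r. F r \<partial>lborel)"
      by (rule mult_left_mono) simp
    also have "\<dots> \<le> J"
      unfolding F_def J_def nn_integral_min_layer_cake[OF meas(3) m nn(3), symmetric]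
      by (intro nn_integral_mono ennreal_leI) auto
    finally have "ennreal m * (ennreal (1-l) * (\<integral>\<^sup>+r. F0 r \<partial>lborel) + ennreal l * (\<integral>\<^sup>+r. F1 r \<partial>lborel)) \<le> J" .
    moreover have "(\<integral>\<^sup>+r. F0 r \<partial>lborel) = ennreal (enn2real J0 / a)"
      using nn_integral_Sup_layer_cake[OF meas(1) nn(1) bdd(1)] a fin(1)
      by (intro ennreal_eq_div_of_eq_mult) (simp_all add: J0_def F0_def a_def)
    moreover have "(\<integral>\<^sup>+r. F1 r \<partial>lborel) = ennreal (enn2real J1 / b)"
      using nn_integral_Sup_layer_cake[OF meas(2) nn(2) bdd(2)] b fin(2)
      by (intro ennreal_eq_div_of_eq_mult) (simp_all add: J1_def F1_def b_def)
    ultimately have "ennreal (m * ((1-l) * (enn2real J0 / a) + l * (enn2real J1 / b))) \<le> ennreal (enn2real J)"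
      using l a b m I0 I1 fin(3)
      by (simp add: J_def ennreal_mult[symmetric] ennreal_plus[symmetric] del: ennreal_plus)
    then have "m * ((1-l) * (enn2real J0 / a) + l * (enn2real J1 / b)) \<le> enn2real J"
      by (subst (asm) ennreal_le_iff) auto
    then show ?thesis using power_mean_le_of_ratio_bound[OF l a b I0 I1] unfolding m_def by simp
  qed
  then show ?thesis unfolding J0_def[symmetric] J1_def[symmetric] J_def[symmetric]
    by (auto simp: power_mean_le_def)
qed

abbreviation Pi_lborel :: "'i set \<Rightarrow> ('i \<Rightarrow> real) measure" where
  "Pi_lborel I \<equiv> PiM I (\<lambda>_. lborel)"

definition fun_convex_comb :: "real \<Rightarrow> ('i \<Rightarrow> real) \<Rightarrow> ('i \<Rightarrow> real) \<Rightarrow> ('i \<Rightarrow> real)" where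
  "fun_convex_comb l x0 x1 = (\<lambda>i. (1-l) * x0 i + l * x1 i)"

lemma fun_convex_comb_upd:
  "fun_convex_comb l (x0(i := t0)) (x1(i := t1)) = (fun_convex_comb l x0 x1)(i := (1-l)*t0 + l*t1)"
  by (auto simp: fun_convex_comb_def)

lemma fun_convex_comb_same: "fun_convex_comb l x x = x"
  by (auto simp: fun_convex_comb_def algebra_simps)

lemma fun_convex_comb_space:
  "x0 \<in> space (Pi_lborel I) \<Longrightarrow> x1 \<in> space (Pi_lborel I) \<Longrightarrow> fun_convex_comb l x0 x1 \<in> space (Pi_lborel I)"
  by (auto simp: space_PiM PiE_def extensional_def fun_convex_comb_def algebra_simps)

definition product_dominated :: "(real \<Rightarrow> real) \<Rightarrow> 'i set \<Rightarrow> (('i \<Rightarrow> real) \<Rightarrow> real) \<Rightarrow> bool" where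
  "product_dominated \<rho> I G \<longleftrightarrow> (\<exists>C\<ge>0. \<forall>x\<in>space (Pi_lborel I). G x \<le> C * (\<Prod>i\<in>I. \<rho> (x i)))"

definition partial_integral :: "'i \<Rightarrow> (('i \<Rightarrow> real) \<Rightarrow> real) \<Rightarrow> ('i \<Rightarrow> real) \<Rightarrow> real" where
  "partial_integral i G x = enn2real (\<integral>\<^sup>+t. ennreal (G (x(i := t))) \<partial>lborel)"

lemma upd_in_space_Pi_lborel:
  "x \<in> space (Pi_lborel I) \<Longrightarrow> x(i := t) \<in> space (Pi_lborel (insert i I))"
  by (auto simp: space_PiM PiE_def extensional_def)

lemma slice_le_product:
  assumes "finite I" "i \<notin> I" "x \<in> space (Pi_lborel I)"
    and "\<forall>x\<in>space (Pi_lborel (insert i I)). G x \<le> C * (\<Prod>j\<in>insert i I. \<rho> (x j))"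
  shows "G (x(i := t)) \<le> C * (\<Prod>j\<in>I. \<rho> (x j)) * \<rho> t"
proof -
  have "(\<Prod>j\<in>I. \<rho> ((x(i := t)) j)) = (\<Prod>j\<in>I. \<rho> (x j))"
    using assms(2) by (intro prod.cong) auto
  then have prod: "(\<Prod>j\<in>insert i I. \<rho> ((x(i := t)) j)) = \<rho> t * (\<Prod>j\<in>I. \<rho> (x j))"
    using assms(1,2) by simp
  have "G (x(i := t)) \<le> C * (\<Prod>j\<in>insert i I. \<rho> ((x(i := t)) j))"
    using assms(4) upd_in_space_Pi_lborel[OF assms(3)] by blast
  then show ?thesis unfolding prod by (simp add: mult_ac)
qed

lemma slice_measurable:
  assumes "x \<in> space (Pi_lborel I)" "i \<notin> I" "G \<in> borel_measurable (Pi_lborel (insert i I))"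
  shows "(\<lambda>t. G (x(i := t))) \<in> borel_measurable lborel"
  using measurable_compose[OF measurable_component_update[OF assms(1,2)] assms(3)] by simp

lemma partial_integral_measurable:
  assumes "i \<notin> I" and [measurable]: "G \<in> borel_measurable (Pi_lborel (insert i I))"
  shows "partial_integral i G \<in> borel_measurable (Pi_lborel I)"
proof -
  have "(\<lambda>(x, t). ennreal (G (x(i := t)))) \<in> borel_measurable (Pi_lborel I \<Otimes>\<^sub>M lborel)"
    using measurable_add_dim[of i I "\<lambda>_. lborel :: real measure"] assms(1) by measurable
  then have "(\<lambda>x. \<integral>\<^sup>+t. ennreal (G (x(i := t))) \<partial>lborel) \<in> borel_measurable (Pi_lborel I)"
    by (rule lborel.borel_measurable_nn_integral)
  then show ?thesis unfolding partial_integral_def by measurable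
qed

context
  fixes \<rho> :: "real \<Rightarrow> real"
  assumes \<rho>: "\<And>t. 0 \<le> \<rho> t" "\<And>t. \<rho> t \<le> 1" "\<rho> \<in> borel_measurable lborel"
    "(\<integral>\<^sup>+t. ennreal (\<rho> t) \<partial>lborel) < \<infinity>"
begin

lemma nn_integral_slice_le:
  assumes "finite I" "i \<notin> I" "x \<in> space (Pi_lborel I)" "C \<ge> 0"
    and "\<forall>x\<in>space (Pi_lborel (insert i I)). G x \<le> C * (\<Prod>j\<in>insert i I. \<rho> (x j))"
  shows "(\<integral>\<^sup>+t. ennreal (G (x(i := t))) \<partial>lborel)
           \<le> ennreal (C * (\<Prod>j\<in>I. \<rho> (x j)) * enn2real (\<integral>\<^sup>+t. ennreal (\<rho> t) \<partial>lborel))"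
proof -
  define D where "D = C * (\<Prod>j\<in>I. \<rho> (x j))"
  have D: "D \<ge> 0" unfolding D_def using assms(4) \<rho>(1) by (simp add: prod_nonneg)
  have "(\<integral>\<^sup>+t. ennreal (G (x(i := t))) \<partial>lborel) \<le> (\<integral>\<^sup>+t. ennreal D * ennreal (\<rho> t) \<partial>lborel)"
    using slice_le_product[OF assms(1,2,3,5)] D \<rho>(1)
    by (intro nn_integral_mono) (simp add: D_def ennreal_mult[symmetric] ennreal_leI)
  also have "\<dots> = ennreal D * (\<integral>\<^sup>+t. ennreal (\<rho> t) \<partial>lborel)"
    using \<rho>(3) by (simp add: nn_integral_cmult)
  finally show ?thesis using \<rho>(4) D by (simp add: D_def ennreal_mult)
qed

lemma nn_integral_slice_finite:
  assumes "finite I" "i \<notin> I" "x \<in> space (Pi_lborel I)" "product_dominated \<rho> (insert i I) G"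
  shows "(\<integral>\<^sup>+t. ennreal (G (x(i := t))) \<partial>lborel) < \<infinity>"
proof -
  obtain C where "C \<ge> 0" "\<forall>x\<in>space (Pi_lborel (insert i I)). G x \<le> C * (\<Prod>j\<in>insert i I. \<rho> (x j))"
    using assms(4) unfolding product_dominated_def by blast
  from nn_integral_slice_le[OF assms(1,2,3) this] show ?thesis
    by (rule le_less_trans) simp
qed

lemma slice_bounded:
  assumes "finite I" "i \<notin> I" "x \<in> space (Pi_lborel I)" "product_dominated \<rho> (insert i I) G"
  shows "\<exists>B. \<forall>t. G (x(i := t)) \<le> B"
proof -
  obtain C where C: "C \<ge> 0" "\<forall>x\<in>space (Pi_lborel (insert i I)). G x \<le> C * (\<Prod>j\<in>insert i I. \<rho> (x j))"
    using assms(4) unfolding product_dominated_def by blast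
  define D where "D = C * (\<Prod>j\<in>I. \<rho> (x j))"
  have "D \<ge> 0" unfolding D_def using C(1) \<rho>(1) by (simp add: prod_nonneg)
  have "G (x(i := t)) \<le> D" for t
  proof -
    have "G (x(i := t)) \<le> D * \<rho> t" unfolding D_def by (rule slice_le_product[OF assms(1,2,3) C(2)])
    also have "\<dots> \<le> D" by (rule mult_left_le[OF \<rho>(2) \<open>D \<ge> 0\<close>])
    finally show ?thesis .
  qed
  then show ?thesis by blast
qed

lemma product_dominated_partial_integral:
  assumes "finite I" "i \<notin> I" "product_dominated \<rho> (insert i I) G"
  shows "product_dominated \<rho> I (partial_integral i G)"
proof -
  obtain C where C: "C \<ge> 0" "\<forall>x\<in>space (Pi_lborel (insert i I)). G x \<le> C * (\<Prod>j\<in>insert i I. \<rho> (x j))"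
    using assms(3) unfolding product_dominated_def by blast
  define K where "K = enn2real (\<integral>\<^sup>+t. ennreal (\<rho> t) \<partial>lborel)"
  have "partial_integral i G x \<le> (C * K) * (\<Prod>j\<in>I. \<rho> (x j))" if "x \<in> space (Pi_lborel I)" for x
    unfolding partial_integral_def
  proof (rule enn2real_leI)
    show "0 \<le> C * K * (\<Prod>j\<in>I. \<rho> (x j))" using C(1) \<rho>(1) by (simp add: K_def prod_nonneg)
    show "(\<integral>\<^sup>+t. ennreal (G (x(i := t))) \<partial>lborel) \<le> ennreal (C * K * (\<Prod>j\<in>I. \<rho> (x j)))"
      using nn_integral_slice_le[OF assms(1,2) that C] unfolding K_def by (simp add: mult_ac)
  qed
  moreover have "C * K \<ge> 0" using C(1) by (simp add: K_def)
  ultimately show ?thesis unfolding product_dominated_def by blast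
qed


lemma nn_integral_Pi_lborel_insert:
  assumes "finite I" "i \<notin> I" "G \<in> borel_measurable (Pi_lborel (insert i I))"
    and "product_dominated \<rho> (insert i I) G"
  shows "(\<integral>\<^sup>+x. ennreal (G x) \<partial>Pi_lborel (insert i I)) = (\<integral>\<^sup>+x. ennreal (partial_integral i G x) \<partial>Pi_lborel I)"
proof -
  interpret product_sigma_finite "\<lambda>_::'i. lborel :: real measure" by standard
  have "(\<integral>\<^sup>+x. ennreal (G x) \<partial>Pi_lborel (insert i I))
      = (\<integral>\<^sup>+x. (\<integral>\<^sup>+t. ennreal (G (x(i := t))) \<partial>lborel) \<partial>Pi_lborel I)"
    using assms by (intro product_nn_integral_insert) auto
  also have "\<dots> = (\<integral>\<^sup>+x. ennreal (partial_integral i G x) \<partial>Pi_lborel I)"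
    using nn_integral_slice_finite[OF assms(1,2) _ assms(4)]
    by (intro nn_integral_cong) (simp add: partial_integral_def)
  finally show ?thesis .
qed

text \<open>The one-dimensional inequality applies to the slices, which are quasi-concave because the
  hypothesis, applied to two points of the same slice, dominates their minimum.\<close>
lemma power_mean_le_partial_integral:
  fixes G :: "'y::real_vector \<Rightarrow> ('i \<Rightarrow> real) \<Rightarrow> real"
  assumes I: "finite I" "i \<notin> I" and l: "0 \<le> l" "l \<le> 1"
    and nn: "\<And>y x. 0 \<le> G y x" and meas: "\<And>y. G y \<in> borel_measurable (Pi_lborel (insert i I))"
    and dom: "\<And>y. product_dominated \<rho> (insert i I) (G y)"
    and cc: "\<And>y0 y1 x0 x1 l. 0 \<le> l \<Longrightarrow> l \<le> 1 \<Longrightarrow>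
        x0 \<in> space (Pi_lborel (insert i I)) \<Longrightarrow> x1 \<in> space (Pi_lborel (insert i I)) \<Longrightarrow>
        power_mean_le (Suc k) l (G y0 x0) (G y1 x1) (G ((1-l) *\<^sub>R y0 + l *\<^sub>R y1) (fun_convex_comb l x0 x1))"
    and x: "x0 \<in> space (Pi_lborel I)" "x1 \<in> space (Pi_lborel I)"
  shows "power_mean_le k l (partial_integral i (G y0) x0) (partial_integral i (G y1) x1)
           (partial_integral i (G ((1-l) *\<^sub>R y0 + l *\<^sub>R y1)) (fun_convex_comb l x0 x1))"
proof -
  define ym where "ym = (1-l) *\<^sub>R y0 + l *\<^sub>R y1"
  define xm where "xm = fun_convex_comb l x0 x1"
  have xm: "xm \<in> space (Pi_lborel I)" unfolding xm_def using x by (rule fun_convex_comb_space)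
  have qc: "min (G y (x(i := t))) (G y (x(i := t'))) \<le> G y (x(i := (1-u)*t + u*t'))"
    if "x \<in> space (Pi_lborel I)" "0 \<le> u" "u \<le> 1" for y x t t' u
  proof -
    have "(1-u) *\<^sub>R y + u *\<^sub>R y = y" by (simp add: algebra_simps)
    then have "power_mean_le (Suc k) u (G y (x(i := t))) (G y (x(i := t'))) (G y (x(i := (1-u)*t + u*t')))"
      using cc[of u "x(i := t)" "x(i := t')" y y, OF that(2,3) upd_in_space_Pi_lborel[OF that(1)]
          upd_in_space_Pi_lborel[OF that(1)]]
      by (simp add: fun_convex_comb_upd fun_convex_comb_same)
    then show ?thesis using that nn by (intro power_mean_le_min) auto
  qed
  obtain B0 where "\<And>t. G y0 (x0(i := t)) \<le> B0" using slice_bounded[OF I x(1) dom] by blast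
  moreover obtain B1 where "\<And>t. G y1 (x1(i := t)) \<le> B1" using slice_bounded[OF I x(2) dom] by blast
  moreover have "power_mean_le (Suc k) l (G y0 (x0(i := t0))) (G y1 (x1(i := t1))) (G ym (xm(i := (1-l)*t0 + l*t1)))"
    for t0 t1
    using cc[of l "x0(i := t0)" "x1(i := t1)" y0 y1, OF l upd_in_space_Pi_lborel[OF x(1)]
        upd_in_space_Pi_lborel[OF x(2)]]
    by (simp add: ym_def xm_def fun_convex_comb_upd)
  ultimately show ?thesis unfolding partial_integral_def ym_def[symmetric] xm_def[symmetric]
    using nn_integral_slice_finite[OF I _ dom] x xm
    by (intro borell_brascamp_lieb_real l nn slice_measurable[OF _ I(2) meas] qc) auto
qed

text \<open>The parameter \<open>y\<close> carries the variables that are not integrated out.\<close>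
theorem borell_brascamp_lieb_Pi_lborel:
  fixes G :: "'y::real_vector \<Rightarrow> ('i \<Rightarrow> real) \<Rightarrow> real"
  assumes "finite I" and l: "0 \<le> l" "l \<le> 1"
    and "\<And>y x. 0 \<le> G y x" "\<And>y. G y \<in> borel_measurable (Pi_lborel I)"
    and "\<And>y. product_dominated \<rho> I (G y)"
    and "\<And>y0 y1 x0 x1 l. 0 \<le> l \<Longrightarrow> l \<le> 1 \<Longrightarrow> x0 \<in> space (Pi_lborel I) \<Longrightarrow> x1 \<in> space (Pi_lborel I) \<Longrightarrow>
        power_mean_le (j + card I) l (G y0 x0) (G y1 x1) (G ((1-l) *\<^sub>R y0 + l *\<^sub>R y1) (fun_convex_comb l x0 x1))"
  shows "power_mean_le j l (enn2real (\<integral>\<^sup>+x. ennreal (G y0 x) \<partial>Pi_lborel I))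
           (enn2real (\<integral>\<^sup>+x. ennreal (G y1 x) \<partial>Pi_lborel I))
           (enn2real (\<integral>\<^sup>+x. ennreal (G ((1-l) *\<^sub>R y0 + l *\<^sub>R y1) x) \<partial>Pi_lborel I))"
  using assms(1,4-)
proof (induction I arbitrary: G j rule: finite_induct)
  case empty
  have "(\<integral>\<^sup>+x. ennreal (G y x) \<partial>Pi_lborel {}) = ennreal (G y (\<lambda>_. undefined))" for y
    by (simp add: PiM_empty nn_integral_count_space_finite)
  then show ?case
    using empty.prems(4)[OF l, of "\<lambda>_. undefined" "\<lambda>_. undefined" y0 y1] empty.prems(1)
    by (simp add: PiM_empty fun_convex_comb_same)
next
  case (insert i I)
  let ?H = "\<lambda>y. partial_integral i (G y)"
  have "power_mean_le j l (enn2real (\<integral>\<^sup>+x. ennreal (?H y0 x) \<partial>Pi_lborel I))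
      (enn2real (\<integral>\<^sup>+x. ennreal (?H y1 x) \<partial>Pi_lborel I))
      (enn2real (\<integral>\<^sup>+x. ennreal (?H ((1-l) *\<^sub>R y0 + l *\<^sub>R y1) x) \<partial>Pi_lborel I))"
  proof (rule insert.IH)
    show "0 \<le> ?H y x" for y x by (simp add: partial_integral_def)
    show "?H y \<in> borel_measurable (Pi_lborel I)" for y
      using insert.hyps(2) insert.prems(2) by (rule partial_integral_measurable)
    show "product_dominated \<rho> I (?H y)" for y
      using insert.hyps insert.prems(3) by (rule product_dominated_partial_integral)
    show "power_mean_le (j + card I) l' (?H y0' x0) (?H y1' x1)
        (?H ((1-l') *\<^sub>R y0' + l' *\<^sub>R y1') (fun_convex_comb l' x0 x1))"
      if "0 \<le> l'" "l' \<le> 1" "x0 \<in> space (Pi_lborel I)" "x1 \<in> space (Pi_lborel I)" for y0' y1' x0 x1 l'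
      using insert.hyps that insert.prems
      by (intro power_mean_le_partial_integral) auto
  qed
  then show ?case
    using nn_integral_Pi_lborel_insert[OF insert.hyps insert.prems(2,3)] by simp
qed

end

lemma deriv_one_plus_powr_root_mono:
  fixes p n x y :: real
  assumes p: "p \<ge> n" and n: "n \<ge> 1" and xy: "0 < x" "x \<le> y"
  shows "(1/n) * (1 + x powr p) powr (1/n - 1) * (p * x powr (p - 1))
       \<le> (1/n) * (1 + y powr p) powr (1/n - 1) * (p * y powr (p - 1))"
proof -
  define beta where "beta = 1 - 1/n"
  have b0: "beta \<ge> 0" "beta < 1" using n unfolding beta_def by auto
  have ex: "p/n - 1 \<ge> 0" using p n by (simp add: field_simps)
  \<comment> \<open>a product of two nondecreasing nonnegative factors\<close>
  have id: "(1/n) * (1 + t powr p) powr (1/n - 1) * (p * t powr (p - 1))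
      = (p/n) * (t powr (p/n - 1) * (t powr p / (1 + t powr p)) powr beta)" if t: "t > 0" for t
  proof -
    have pos: "1 + t powr p > 0" using t by (smt (verit) powr_ge_zero)
    have "(t powr p / (1 + t powr p)) powr beta = t powr (p * beta) / (1 + t powr p) powr beta"
      using t pos by (simp add: powr_divide powr_powr)
    moreover have "(1 + t powr p) powr (1/n - 1) = 1 / (1 + t powr p) powr beta"
      using pos unfolding beta_def by (simp add: powr_minus_divide[symmetric])
    moreover have "t powr (p - 1) = t powr (p/n - 1) * t powr (p * beta)"
      using t unfolding beta_def by (simp add: powr_add[symmetric] algebra_simps)
    ultimately show ?thesis by (simp add: field_simps)
  qed
  have m1: "x powr (p/n - 1) \<le> y powr (p/n - 1)" using xy ex by (intro powr_mono2) auto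
  have fr: "x powr p / (1 + x powr p) \<le> y powr p / (1 + y powr p)"
  proof -
    have "x powr p \<le> y powr p" using xy p n by (intro powr_mono2) auto
    moreover have "t powr p / (1 + t powr p) = 1 - 1 / (1 + t powr p)" if "t > 0" for t
      using that by (smt (verit) add_divide_distrib divide_self_if powr_ge_zero)
    ultimately show ?thesis using xy
      by (smt (verit, best) divide_left_mono frac_le powr_ge_zero)
  qed
  have m2: "(x powr p / (1 + x powr p)) powr beta \<le> (y powr p / (1 + y powr p)) powr beta"
    using fr b0 xy by (intro powr_mono2) (auto simp: divide_nonneg_pos)
  have "x powr (p/n - 1) * (x powr p / (1 + x powr p)) powr beta \<le> y powr (p/n - 1) * (y powr p / (1 + y powr p)) powr beta"
    using m1 m2 by (intro mult_mono) auto
  then have "(p/n) * (x powr (p/n - 1) * (x powr p / (1 + x powr p)) powr beta) \<le> (p/n) * (y powr (p/n - 1) * (y powr p / (1 + y powr p)) powr beta)"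
    using p n by (intro mult_left_mono) auto
  moreover have "y > 0" using xy by simp
  ultimately show ?thesis unfolding id[OF xy(1)] id[OF \<open>y > 0\<close>] by blast
qed

lemma convex_on_one_plus_powr_root:
  fixes p n :: real
  assumes p: "p \<ge> n" and n: "n \<ge> 1"
  shows "convex_on {0<..} (\<lambda>t. (1 + t powr p) powr (1/n))"
proof (rule convex_on_realI[where f' = "\<lambda>t. (1/n) * (1 + t powr p) powr (1/n - 1) * (p * t powr (p - 1))"])
  show "connected {0::real<..}" by simp
  fix x :: real assume x: "x \<in> {0<..}"
  have pos: "1 + x powr p > 0" using x by (smt (verit) powr_ge_zero)
  show "((\<lambda>t. (1 + t powr p) powr (1/n)) has_real_derivative
      (1/n) * (1 + x powr p) powr (1/n - 1) * (p * x powr (p - 1))) (at x)"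
    using x pos by (auto intro!: derivative_eq_intros)
next
  fix x y :: real assume "x \<in> {0<..}" "y \<in> {0<..}" "x \<le> y"
  then show "(1/n) * (1 + x powr p) powr (1/n - 1) * (p * x powr (p - 1))
       \<le> (1/n) * (1 + y powr p) powr (1/n - 1) * (p * y powr (p - 1))"
    using deriv_one_plus_powr_root_mono[OF p n] by auto
qed

lemma continuous_on_one_plus_powr_root:
  fixes p n :: real
  assumes "p > 0"
  shows "continuous_on {0..} (\<lambda>t. (1 + t powr p) powr (1/n))"
proof -
  have "continuous_on {0..} (\<lambda>t::real. t powr p)"
    using assms by (intro continuous_on_powr' continuous_intros) auto
  then have c: "continuous_on {0..} (\<lambda>t::real. 1 + t powr p)"
    using continuous_on_add[OF continuous_on_const] by blast
  show ?thesis
  proof (rule continuous_on_powr'[OF c continuous_on_const], intro ballI conjI impI)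
    fix t :: real assume "t \<in> {0..}"
    have "t powr p \<ge> 0" by simp
    then show "0 \<le> 1 + t powr p" by simp
    assume "1 + t powr p = 0" with \<open>t powr p \<ge> 0\<close> show "0 < 1/n" by linarith
  qed
qed

lemma one_plus_powr_root_convex_comb:
  fixes p n a b l :: real
  assumes p: "p \<ge> n" and n: "n \<ge> 1" and ab: "a \<ge> 0" "b \<ge> 0" and l: "0 \<le> l" "l \<le> 1"
  shows "(1 + ((1-l)*a + l*b) powr p) powr (1/n) \<le> (1-l) * (1 + a powr p) powr (1/n) + l * (1 + b powr p) powr (1/n)"
proof -
  \<comment> \<open>the derivative test gives convexity on \<open>{0<..}\<close>; shift \<open>a, b\<close> by \<open>1/(k+1)\<close> and pass to the limit\<close>
  define \<phi> where "\<phi> = (\<lambda>t::real. (1 + t powr p) powr (1/n))"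
  have cont: "continuous_on {0..} \<phi>" unfolding \<phi>_def using p n by (intro continuous_on_one_plus_powr_root) auto
  define e where "e = (\<lambda>k::nat. 1 / real (Suc k))"
  have e0: "e \<longlonglongrightarrow> 0" unfolding e_def by (rule LIMSEQ_Suc[OF lim_const_over_n])
  have epos: "e k > 0" for k unfolding e_def by simp
  have ineq: "\<phi> ((1-l)*(a + e k) + l*(b + e k)) \<le> (1-l) * \<phi> (a + e k) + l * \<phi> (b + e k)" for k
    using convex_onD[OF convex_on_one_plus_powr_root[OF p n], of l "a + e k" "b + e k"] ab l epos[of k]
    unfolding \<phi>_def by (simp add: add_pos_nonneg add_nonneg_pos)
  have lim: "(\<lambda>k. \<phi> (c + e k)) \<longlonglongrightarrow> \<phi> c" if "c \<ge> 0" for c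
  proof -
    have "(\<lambda>k. c + e k) \<longlonglongrightarrow> c" using tendsto_add[OF tendsto_const e0, of c] by simp
    moreover have "\<forall>\<^sub>F k in sequentially. c + e k \<in> {0..}" using that epos by (intro always_eventually allI) (simp add: less_imp_le)
    ultimately show ?thesis
      using continuous_on_tendsto_compose[OF cont, of "\<lambda>k. c + e k" c sequentially] that by simp
  qed
  have "(\<lambda>k. \<phi> ((1-l)*a + l*b + e k)) \<longlonglongrightarrow> \<phi> ((1-l)*a + l*b)"
    using ab l by (intro lim) auto
  moreover have "(\<lambda>k. (1-l) * \<phi> (a + e k) + l * \<phi> (b + e k)) \<longlonglongrightarrow> (1-l) * \<phi> a + l * \<phi> b"
    using ab by (intro tendsto_intros lim)
  moreover have "(1-l)*(a + e k) + l*(b + e k) = (1-l)*a + l*b + e k" for k by (simp add: algebra_simps)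
  ultimately have "\<phi> ((1-l)*a + l*b) \<le> (1-l) * \<phi> a + l * \<phi> b"
    using ineq by (intro LIMSEQ_le) auto
  then show ?thesis unfolding \<phi>_def .
qed

context
  fixes Nn :: "'a::euclidean_space \<Rightarrow> real"
  assumes an: "aniso_norm Nn"
begin

lemma aniso_norm_convex_comb: "Nn ((1-l) *\<^sub>R x + l *\<^sub>R y) \<le> (1-l) * Nn x + l * Nn y" if "0 \<le> l" "l \<le> 1"
  using an that unfolding aniso_norm_def by (auto intro: convex_onD)

lemma aniso_norm_scaleR: "c \<ge> 0 \<Longrightarrow> Nn (c *\<^sub>R x) = c * Nn x"
  using an unfolding aniso_norm_def by auto

lemma aniso_norm_lower_bound: "\<exists>cl>0. \<forall>x. cl * norm x \<le> Nn x"
  using an unfolding aniso_norm_def by (meson order.trans)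

lemma aniso_norm_nonneg: "Nn x \<ge> 0"
proof -
  obtain cl where "cl > 0" "\<forall>x. cl * norm x \<le> Nn x" using aniso_norm_lower_bound by blast
  then show ?thesis by (smt (verit) mult_nonneg_nonneg norm_ge_zero)
qed

lemma aniso_norm_continuous: "continuous_on UNIV Nn"
  using an unfolding aniso_norm_def by (intro convex_on_continuous) auto

lemma aniso_norm_measurable: "Nn \<in> borel_measurable borel"
  using aniso_norm_continuous by (rule borel_measurable_continuous_onI)

end

lemma nn_integral_powr_tail_finite:
  fixes q :: real assumes q: "q > 1"
  shows "(\<integral>\<^sup>+t. ennreal (indicator {1..} t * t powr (-q)) \<partial>lborel) < \<infinity>"
proof -
  have "((\<lambda>x. x powr (-q)) has_integral -(1 powr (-q+1)) / (-q+1)) {1..}"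
    using q by (intro has_integral_powr_to_inf) auto
  then have "(\<integral>\<^sup>+t. ennreal (t powr (-q)) * indicator {1..} t \<partial>lborel) = ennreal (-(1 powr (-q+1)) / (-q+1))"
    by (intro nn_integral_has_integral_lebesgue') auto
  moreover have "(\<integral>\<^sup>+t. ennreal (indicator {1..} t * t powr (-q)) \<partial>lborel) = (\<integral>\<^sup>+t. ennreal (t powr (-q)) * indicator {1..} t \<partial>lborel)"
    by (intro nn_integral_cong) (auto simp: indicator_def)
  ultimately show ?thesis by simp
qed

definition tail_profile :: "real \<Rightarrow> real \<Rightarrow> real" where
  "tail_profile q t = (max 1 \<bar>t\<bar>) powr (-q)"

lemma tail_profile_le_split:
  "ennreal (tail_profile q t)
     \<le> indicator {-1..1} t + ennreal (indicator {1..} t * t powr (-q))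
        + ennreal (indicator {1..} (-t) * (-t) powr (-q))"
proof (cases "\<bar>t\<bar> \<le> 1")
  case True
  then have "tail_profile q t = 1" "indicator {-1..1} t = (1::ennreal)"
    by (auto simp: tail_profile_def indicator_def abs_le_iff)
  then show ?thesis by (simp add: add.assoc add_increasing2)
next
  case False
  then show ?thesis by (cases "t > 1") (auto simp: tail_profile_def indicator_def)
qed

lemma nn_integral_tail_profile_finite:
  assumes q: "q > 1"
  shows "(\<integral>\<^sup>+t. ennreal (tail_profile q t) \<partial>lborel) < \<infinity>"
proof -
  define f where "f t = indicator {1..} t * t powr (-q)" for t :: real
  have [measurable]: "f \<in> borel_measurable borel" unfolding f_def by measurable
  have "(\<integral>\<^sup>+t. ennreal (tail_profile q t) \<partial>lborel)
      \<le> (\<integral>\<^sup>+t. indicator {-1..1} t + ennreal (f t) + ennreal (f (0 + (-1) * t)) \<partial>lborel)"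
    using tail_profile_le_split by (intro nn_integral_mono) (simp add: f_def)
  also have "\<dots> = (\<integral>\<^sup>+t. indicator {-1..1::real} t \<partial>lborel) + (\<integral>\<^sup>+t. ennreal (f t) \<partial>lborel)
      + (\<integral>\<^sup>+t. ennreal (f (0 + (-1) * t)) \<partial>lborel)"
    by (subst nn_integral_add; measurable; subst nn_integral_add) measurable
  also have "(\<integral>\<^sup>+t. ennreal (f (0 + (-1) * t)) \<partial>lborel) = (\<integral>\<^sup>+t. ennreal (f t) \<partial>lborel)"
    using nn_integral_real_affine[of "\<lambda>t. ennreal (f t)" "-1" 0] by simp
  also have "(\<integral>\<^sup>+t. indicator {-1..1::real} t \<partial>lborel) = 2" by simp
  also have "2 + (\<integral>\<^sup>+t. ennreal (f t) \<partial>lborel) + (\<integral>\<^sup>+t. ennreal (f t) \<partial>lborel) < \<infinity>"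
    using nn_integral_powr_tail_finite[OF q] unfolding f_def by simp
  finally show ?thesis .
qed

lemma tail_profile_props:
  assumes "q > 1"
  shows "\<And>t. 0 \<le> tail_profile q t" "\<And>t. tail_profile q t \<le> 1"
    "tail_profile q \<in> borel_measurable lborel" "(\<integral>\<^sup>+t. ennreal (tail_profile q t) \<partial>lborel) < \<infinity>"
proof -
  show "0 \<le> tail_profile q t" for t unfolding tail_profile_def by simp
  show "tail_profile q t \<le> 1" for t
  proof -
    have "max 1 \<bar>t\<bar> \<noteq> 0" by linarith
    then show ?thesis using powr_mono[of "-q" 0 "max 1 \<bar>t\<bar>"] assms by (simp add: tail_profile_def)
  qed
  show "tail_profile q \<in> borel_measurable lborel" unfolding tail_profile_def by measurable
qed (rule nn_integral_tail_profile_finite[OF assms])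

lemma inverse_one_plus_powr_le:
  fixes r k pp :: real
  assumes r: "r \<ge> 0" and k: "k > 0" and pp: "pp > 0"
  shows "1 / (1 + (k * r) powr pp) \<le> max 1 (k powr (-pp)) * (max 1 r) powr (-pp)"
proof -
  define M where "M = max 1 (k powr (-pp))"
  have M1: "M \<ge> 1" unfolding M_def by simp
  have a: "(max 1 r) powr pp \<le> 1 + r powr pp"
    by (cases "r \<le> 1") (auto simp: max_def)
  have "r powr pp = k powr (-pp) * (k * r) powr pp"
    using k r by (simp add: powr_mult powr_minus field_simps)
  also have "\<dots> \<le> M * (k * r) powr pp" unfolding M_def by (intro mult_right_mono) auto
  finally have b: "1 + r powr pp \<le> M * (1 + (k * r) powr pp)" using M1 by (simp add: algebra_simps)
  have pos1: "1 + (k * r) powr pp > 0" by (smt (verit) powr_ge_zero)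
  have pos2: "(max 1 r) powr pp > 0" by simp
  have "(max 1 r) powr pp \<le> M * (1 + (k * r) powr pp)" using a b by linarith
  then have "1 / (1 + (k * r) powr pp) \<le> M / (max 1 r) powr pp"
    using pos1 pos2 by (simp add: field_simps)
  also have "M / (max 1 r) powr pp = M * (max 1 r) powr (-pp)" by (simp add: powr_minus divide_inverse)
  finally show ?thesis unfolding M_def .
qed

lemma kerPh_eq:
  fixes Nn :: "'a::euclidean_space \<Rightarrow> real"
  assumes "aniso_norm Nn" "0 < h"
  obtains c0 c1 where "c0 > 0" "c1 > 0"
    "\<And>z. kerPh Nn s h z = c0 / (1 + (c1 * Nn z) powr (real DIM('a) + s))"
proof
  have sig: "sigma_h s h > 0" unfolding sigma_h_def using assms(2) by simp
  show "sigma_h s h powr (- real DIM('a) / s) > 0" "1 / sigma_h s h powr (1 / s) > 0"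
    using sig by simp_all
  show "kerPh Nn s h z = sigma_h s h powr (- real DIM('a) / s)
      / (1 + (1 / sigma_h s h powr (1 / s) * Nn z) powr (real DIM('a) + s))" for z
    unfolding kerPh_def kerP_def using aniso_norm_scaleR[OF assms(1)] by simp
qed

context
  fixes Nn :: "'a::euclidean_space \<Rightarrow> real" and s h :: real
  assumes an: "aniso_norm Nn" and s: "0 < s" and h: "0 < h"
begin

lemma kerPh_pos: "kerPh Nn s h z > 0"
proof -
  obtain c0 c1 where "c0 > 0" "kerPh Nn s h z = c0 / (1 + (c1 * Nn z) powr (real DIM('a) + s))"
    using kerPh_eq[OF an h] by metis
  then show ?thesis by (simp add: add_pos_nonneg)
qed

lemma kerPh_measurable[measurable]: "kerPh Nn s h \<in> borel_measurable borel"
proof -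
  obtain c0 c1 where F: "\<And>z. kerPh Nn s h z = c0 / (1 + (c1 * Nn z) powr (real DIM('a) + s))"
    using kerPh_eq[OF an h] by metis
  have "(\<lambda>z. c0 / (1 + (c1 * Nn z) powr (real DIM('a) + s))) \<in> borel_measurable borel"
    using aniso_norm_measurable[OF an] by measurable
  then show ?thesis unfolding F[abs_def] .
qed

lemma kerPh_power_mean_le:
  assumes l: "0 \<le> l" "l \<le> 1"
  shows "power_mean_le DIM('a) l (kerPh Nn s h z0) (kerPh Nn s h z1) (kerPh Nn s h ((1-l) *\<^sub>R z0 + l *\<^sub>R z1))"
proof -
  define N where "N = real DIM('a)"
  have N1: "N \<ge> 1" unfolding N_def by (simp add: Suc_le_eq)
  obtain c0 c1 where c: "c0 > 0" "c1 > 0" and F: "\<And>z. kerPh Nn s h z = c0 / (1 + (c1 * Nn z) powr (N + s))"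
    using kerPh_eq[OF an h] unfolding N_def by metis
  have den: "1 + (c1 * Nn z) powr (N + s) > 0" for z by (simp add: add_pos_nonneg)
  have pw: "kerPh Nn s h z powr (-1/N) = c0 powr (-1/N) * (1 + (c1 * Nn z) powr (N + s)) powr (1/N)" for z
  proof -
    have "kerPh Nn s h z powr (-1/N) = c0 powr (-1/N) / (1 + (c1 * Nn z) powr (N + s)) powr (-1/N)"
      unfolding F using c den[of z] by (simp add: powr_divide)
    also have "\<dots> = c0 powr (-1/N) * (1 + (c1 * Nn z) powr (N + s)) powr (1/N)"
      using den[of z] by (simp add: powr_minus_divide[symmetric] powr_minus divide_inverse)
    finally show ?thesis .
  qed
  define zm where "zm = (1-l) *\<^sub>R z0 + l *\<^sub>R z1"
  have "c1 * Nn zm \<le> (1-l) * (c1 * Nn z0) + l * (c1 * Nn z1)"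
    using mult_left_mono[OF aniso_norm_convex_comb[OF an l, of z0 z1], of c1] c(2) unfolding zm_def
    by (simp add: algebra_simps)
  then have "(1 + (c1 * Nn zm) powr (N + s)) powr (1/N)
      \<le> (1 + ((1-l) * (c1 * Nn z0) + l * (c1 * Nn z1)) powr (N + s)) powr (1/N)"
    using c(2) aniso_norm_nonneg[OF an] N1 s
    by (intro powr_mono2 add_left_mono) (auto intro: add_nonneg_nonneg)
  also have "\<dots> \<le> (1-l) * (1 + (c1 * Nn z0) powr (N + s)) powr (1/N) + l * (1 + (c1 * Nn z1) powr (N + s)) powr (1/N)"
    using c(2) aniso_norm_nonneg[OF an] N1 s l by (intro one_plus_powr_root_convex_comb) auto
  finally have "c0 powr (-1/N) * (1 + (c1 * Nn zm) powr (N + s)) powr (1/N) \<le> c0 powr (-1/N) *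
      ((1-l) * (1 + (c1 * Nn z0) powr (N + s)) powr (1/N) + l * (1 + (c1 * Nn z1) powr (N + s)) powr (1/N))"
    by (intro mult_left_mono) auto
  then have "kerPh Nn s h zm powr (-1/N) \<le> (1-l) * kerPh Nn s h z0 powr (-1/N) + l * kerPh Nn s h z1 powr (-1/N)"
    unfolding pw by (simp add: algebra_simps)
  then show ?thesis
    using kerPh_pos DIM_positive[where 'a='a] unfolding power_mean_le_def zm_def N_def by simp
qed

lemma kerPh_le_norm_decay:
  "\<exists>C\<ge>0. \<forall>z. kerPh Nn s h z \<le> C * (max 1 (norm z)) powr (-(real DIM('a) + s))"
proof -
  define pp where "pp = real DIM('a) + s"
  have pp: "pp > 0" unfolding pp_def using s by simp
  obtain c0 c1 where c: "c0 > 0" "c1 > 0" and F: "\<And>z. kerPh Nn s h z = c0 / (1 + (c1 * Nn z) powr pp)"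
    using kerPh_eq[OF an h] unfolding pp_def by metis
  obtain cl where cl: "cl > 0" "\<And>x. cl * norm x \<le> Nn x" using aniso_norm_lower_bound[OF an] by blast
  define k where "k = c1 * cl"
  have k: "k > 0" unfolding k_def using c cl by simp
  define C where "C = c0 * max 1 (k powr (-pp))"
  have "kerPh Nn s h z \<le> C * (max 1 (norm z)) powr (-pp)" for z
  proof -
    have "(k * norm z) powr pp \<le> (c1 * Nn z) powr pp"
      using cl(2)[of z] c(2) cl(1) pp unfolding k_def by (intro powr_mono2) (auto simp: mult.assoc)
    then have "kerPh Nn s h z \<le> c0 * (1 / (1 + (k * norm z) powr pp))"
      unfolding F using c(1) by (simp add: divide_left_mono add_pos_nonneg)
    also have "\<dots> \<le> c0 * (max 1 (k powr (-pp)) * (max 1 (norm z)) powr (-pp))"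
      using inverse_one_plus_powr_le[OF norm_ge_zero k pp] c(1) by (intro mult_left_mono) auto
    also have "\<dots> = C * (max 1 (norm z)) powr (-pp)" unfolding C_def by simp
    finally show ?thesis .
  qed
  moreover have "C \<ge> 0" unfolding C_def using c by simp
  ultimately show ?thesis unfolding pp_def by blast
qed

end

lemma max_one_norm_powr_le_prod:
  fixes z :: "'a::euclidean_space" and p :: real
  assumes "p \<ge> 0"
  shows "(max 1 (norm z)) powr (-p) \<le> (\<Prod>b\<in>Basis. (max 1 \<bar>z \<bullet> b\<bar>) powr (-(p / real DIM('a))))"
proof -
  have "(max 1 (norm z)) powr (-p) = (\<Prod>b\<in>(Basis::'a set). (max 1 (norm z)) powr (-(p / real DIM('a))))"
    by (simp add: powr_realpow[symmetric] powr_powr)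
  also have "\<dots> \<le> (\<Prod>b\<in>Basis. (max 1 \<bar>z \<bullet> b\<bar>) powr (-(p / real DIM('a))))"
  proof (intro prod_mono conjI)
    fix b :: 'a assume b: "b \<in> Basis"
    then have "\<bar>z \<bullet> b\<bar> \<le> norm z" by (rule Basis_le_norm)
    then show "(max 1 (norm z)) powr (-(p / real DIM('a))) \<le> (max 1 \<bar>z \<bullet> b\<bar>) powr (-(p / real DIM('a)))"
      using assms by (intro powr_mono2') (auto simp: max_def)
  qed simp
  finally show ?thesis .
qed

lemma kerPh_le_prod:
  fixes Nn :: "'a::euclidean_space \<Rightarrow> real"
  assumes "aniso_norm Nn" "0 < s" "0 < h"
  shows "\<exists>C\<ge>0. \<forall>z. kerPh Nn s h z \<le> C * (\<Prod>b\<in>Basis. tail_profile ((real DIM('a) + s) / real DIM('a)) (z \<bullet> b))"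
proof -
  obtain C where "C \<ge> 0" "\<And>z. kerPh Nn s h z \<le> C * (max 1 (norm z)) powr (-(real DIM('a) + s))"
    using kerPh_le_norm_decay[OF assms] by blast
  moreover have "(max 1 (norm z)) powr (-(real DIM('a) + s)) \<le> (\<Prod>b\<in>Basis. tail_profile ((real DIM('a) + s) / real DIM('a)) (z \<bullet> b))"
    for z :: 'a
    using max_one_norm_powr_le_prod[of "real DIM('a) + s" z] assms(2) by (simp add: tail_profile_def)
  ultimately show ?thesis by (meson mult_left_mono order_trans)
qed

lemma prod_inner_sum_Basis:
  "(\<Prod>b\<in>Basis. g ((\<Sum>b'\<in>Basis. f b' *\<^sub>R b') \<bullet> b)) = (\<Prod>b\<in>(Basis::'a::euclidean_space set). g (f b))"
  by (intro prod.cong) simp_all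

lemma sum_Basis_fun_convex_comb:
  "(\<Sum>b\<in>Basis. fun_convex_comb l f0 f1 b *\<^sub>R b)
     = (1-l) *\<^sub>R (\<Sum>b\<in>Basis. f0 b *\<^sub>R b) + l *\<^sub>R (\<Sum>b\<in>(Basis::'a::euclidean_space set). f1 b *\<^sub>R b)"
  by (simp add: fun_convex_comb_def scaleR_add_left sum.distrib scaleR_sum_right)

lemma nn_integral_lborel_eq_Pi_lborel:
  fixes g :: "'a::euclidean_space \<Rightarrow> ennreal"
  assumes [measurable]: "g \<in> borel_measurable borel"
  shows "(\<integral>\<^sup>+z. g z \<partial>lborel) = (\<integral>\<^sup>+f. g (\<Sum>b\<in>Basis. f b *\<^sub>R b) \<partial>Pi_lborel Basis)"
  by (subst lborel_eq) (simp add: nn_integral_distr)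

lemma nn_integral_lborel_reflect:
  fixes F :: "'a::euclidean_space \<Rightarrow> ennreal"
  assumes [measurable]: "F \<in> borel_measurable borel"
  shows "(\<integral>\<^sup>+y. F y \<partial>lborel) = (\<integral>\<^sup>+z. F (x - z) \<partial>lborel)"
  by (subst lborel_affine[of "-1" x]) (simp_all add: nn_integral_density nn_integral_distr)

definition kernel_mass :: "('a::euclidean_space \<Rightarrow> real) \<Rightarrow> 'a set \<Rightarrow> 'a \<Rightarrow> real" where
  "kernel_mass k E x = enn2real (\<integral>\<^sup>+z. ennreal (k z * indicator E (x - z)) \<partial>lborel)"

context
  fixes \<rho> :: "real \<Rightarrow> real" and k :: "'a::euclidean_space \<Rightarrow> real"
  assumes \<rho>: "\<And>t. 0 \<le> \<rho> t" "\<And>t. \<rho> t \<le> 1" "\<rho> \<in> borel_measurable lborel"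
    "(\<integral>\<^sup>+t. ennreal (\<rho> t) \<partial>lborel) < \<infinity>"
    and k_pos: "\<And>z. k z > 0" and k_meas[measurable]: "k \<in> borel_measurable borel"
    and k_bound: "\<exists>C\<ge>0. \<forall>z. k z \<le> C * (\<Prod>b\<in>Basis. \<rho> (z \<bullet> b))"
begin

lemma nn_integral_kernel_finite: "(\<integral>\<^sup>+z. ennreal (k z) \<partial>lborel) < \<infinity>"
proof -
  obtain C where C: "C \<ge> 0" "\<And>z. k z \<le> C * (\<Prod>b\<in>Basis. \<rho> (z \<bullet> b))" using k_bound by blast
  have "(\<integral>\<^sup>+z. ennreal (k z) \<partial>lborel) = (\<integral>\<^sup>+f. ennreal (k (\<Sum>b\<in>Basis. f b *\<^sub>R b)) \<partial>Pi_lborel (Basis::'a set))"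
    by (rule nn_integral_lborel_eq_Pi_lborel) measurable
  also have "\<dots> \<le> (\<integral>\<^sup>+f. ennreal C * (\<Prod>i\<in>Basis. ennreal (\<rho> (f i))) \<partial>Pi_lborel (Basis::'a set))"
  proof (intro nn_integral_mono)
    fix f :: "'a \<Rightarrow> real"
    have "k (\<Sum>b\<in>Basis. f b *\<^sub>R b) \<le> C * (\<Prod>i\<in>Basis. \<rho> (f i))"
      using C(2)[of "\<Sum>b\<in>Basis. f b *\<^sub>R b"] by (simp only: prod_inner_sum_Basis)
    then show "ennreal (k (\<Sum>b\<in>Basis. f b *\<^sub>R b)) \<le> ennreal C * (\<Prod>i\<in>Basis. ennreal (\<rho> (f i)))"
      using C(1) \<rho>(1) by (simp add: ennreal_mult[symmetric] prod_ennreal prod_nonneg ennreal_leI)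
  qed
  also have "\<dots> = ennreal C * (\<integral>\<^sup>+t. ennreal (\<rho> t) \<partial>lborel) ^ card (Basis::'a set)"
  proof -
    interpret product_sigma_finite "\<lambda>_::'a. lborel :: real measure" by standard
    have "(\<integral>\<^sup>+f. (\<Prod>i\<in>Basis. ennreal (\<rho> (f i))) \<partial>Pi_lborel (Basis::'a set))
        = (\<Prod>i\<in>(Basis::'a set). \<integral>\<^sup>+t. ennreal (\<rho> t) \<partial>lborel)"
      using \<rho>(3) by (intro product_nn_integral_prod) auto
    moreover have "(\<lambda>f. \<Prod>i\<in>Basis. ennreal (\<rho> (f i))) \<in> borel_measurable (Pi_lborel (Basis::'a set))"
      using \<rho>(3) by measurable
    ultimately show ?thesis by (simp add: nn_integral_cmult)
  qed
  also have "\<dots> < \<infinity>" using \<rho>(4) by (simp add: ennreal_mult_less_top power_less_top_ennreal)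
  finally show ?thesis .
qed

lemma kernel_mass_quasiconcave:
  assumes k_concave: "\<And>z0 z1 l. 0 \<le> l \<Longrightarrow> l \<le> 1 \<Longrightarrow>
      power_mean_le DIM('a) l (k z0) (k z1) (k ((1-l) *\<^sub>R z0 + l *\<^sub>R z1))"
    and E: "convex E" "E \<in> sets borel" and l: "0 \<le> l" "l \<le> 1"
  shows "min (kernel_mass k E x0) (kernel_mass k E x1) \<le> kernel_mass k E ((1-l) *\<^sub>R x0 + l *\<^sub>R x1)"
proof -
  note [measurable] = E(2)
  define T where "T f = (\<Sum>b\<in>Basis. f b *\<^sub>R b)" for f :: "'a \<Rightarrow> real"
  have [measurable]: "T \<in> measurable (Pi_lborel (Basis::'a set)) borel" unfolding T_def by measurable
  define G where "G x f = k (T f) * indicator E (x - T f)" for x f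
  have G_dom: "product_dominated \<rho> Basis (G x)" for x
  proof -
    obtain C where C: "C \<ge> 0" "\<And>z. k z \<le> C * (\<Prod>b\<in>Basis. \<rho> (z \<bullet> b))" using k_bound by blast
    have "G x f \<le> C * (\<Prod>i\<in>Basis. \<rho> (f i))" for f
      using C(2)[of "T f"] k_pos[of "T f"] unfolding T_def prod_inner_sum_Basis
      by (auto simp: G_def T_def indicator_def)
    then show ?thesis using C(1) unfolding product_dominated_def by blast
  qed
  have G_mean: "power_mean_le DIM('a) l' (G y0 f0) (G y1 f1)
      (G ((1-l') *\<^sub>R y0 + l' *\<^sub>R y1) (fun_convex_comb l' f0 f1))"
    if l': "0 \<le> l'" "l' \<le> 1" for y0 y1 f0 f1 l'
  proof (cases "y0 - T f0 \<in> E \<and> y1 - T f1 \<in> E")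
    case True
    have "(1-l') *\<^sub>R y0 + l' *\<^sub>R y1 - T (fun_convex_comb l' f0 f1) = (1-l') *\<^sub>R (y0 - T f0) + l' *\<^sub>R (y1 - T f1)"
      unfolding T_def sum_Basis_fun_convex_comb by (simp add: algebra_simps)
    also have "\<dots> \<in> E" using convexD[OF E(1), of _ _ "1-l'" l'] True l' by simp
    finally show ?thesis
      using k_concave[OF l', of "T f0" "T f1"] True
      unfolding G_def T_def sum_Basis_fun_convex_comb by simp
  next
    case False
    then show ?thesis unfolding power_mean_le_def G_def by auto
  qed
  have "power_mean_le 0 l (enn2real (\<integral>\<^sup>+f. ennreal (G x0 f) \<partial>Pi_lborel Basis))
      (enn2real (\<integral>\<^sup>+f. ennreal (G x1 f) \<partial>Pi_lborel Basis))
      (enn2real (\<integral>\<^sup>+f. ennreal (G ((1-l) *\<^sub>R x0 + l *\<^sub>R x1) f) \<partial>Pi_lborel Basis))"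
  proof (rule borell_brascamp_lieb_Pi_lborel[OF \<rho> _ l])
    show "0 \<le> G y f" for y f using k_pos[of "T f"] by (simp add: G_def)
    show "G y \<in> borel_measurable (Pi_lborel Basis)" for y unfolding G_def by measurable
  qed (use G_dom G_mean in auto)
  moreover have "kernel_mass k E x = enn2real (\<integral>\<^sup>+f. ennreal (G x f) \<partial>Pi_lborel Basis)" for x
    unfolding kernel_mass_def G_def T_def by (subst nn_integral_lborel_eq_Pi_lborel) auto
  ultimately show ?thesis using l by (intro power_mean_le_min[of 0 l]) (auto simp: kernel_mass_def)
qed

end

lemma conv_sign_indicator_eq:
  fixes k :: "'a::euclidean_space \<Rightarrow> real"
  assumes k_nn: "\<And>z. k z \<ge> 0" and [measurable]: "k \<in> borel_measurable borel"
    and fin: "(\<integral>\<^sup>+z. ennreal (k z) \<partial>lborel) < \<infinity>" and [measurable]: "E \<in> sets borel"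
  shows "conv k (\<lambda>y. indicator E y - indicator (UNIV - E) y) x
           = 2 * kernel_mass k E x - enn2real (\<integral>\<^sup>+z. ennreal (k z) \<partial>lborel)"
proof -
  have eq1: "(\<integral>\<^sup>+y. ennreal (k (x - y)) \<partial>lborel) = (\<integral>\<^sup>+z. ennreal (k z) \<partial>lborel)"
    using nn_integral_lborel_reflect[of "\<lambda>y. ennreal (k (x - y))" x] by simp
  have eq2: "(\<integral>\<^sup>+y. ennreal (k (x - y) * indicator E y) \<partial>lborel)
      = (\<integral>\<^sup>+z. ennreal (k z * indicator E (x - z)) \<partial>lborel)"
    using nn_integral_lborel_reflect[of "\<lambda>y. ennreal (k (x - y) * indicator E y)" x] by simp
  have i1: "integrable lborel (\<lambda>y. k (x - y))"
    using fin k_nn unfolding eq1[symmetric] by (intro integrableI_nonneg) auto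
  have i2: "integrable lborel (\<lambda>y. k (x - y) * indicator E y)"
    using integrable_mult_indicator[OF _ i1, of E] by (simp add: mult.commute)
  have "conv k (\<lambda>y. indicator E y - indicator (UNIV - E) y) x
      = (\<integral>y. 2 * (k (x - y) * indicator E y) - k (x - y) \<partial>lborel)"
    unfolding conv_def by (intro Bochner_Integration.integral_cong) (auto simp: indicator_def)
  also have "\<dots> = 2 * (\<integral>y. k (x - y) * indicator E y \<partial>lborel) - (\<integral>y. k (x - y) \<partial>lborel)"
    using i1 i2 by simp
  also have "(\<integral>y. k (x - y) * indicator E y \<partial>lborel) = kernel_mass k E x"
    unfolding kernel_mass_def using k_nn by (subst integral_eq_nn_integral) (auto simp: eq2)
  also have "(\<integral>y. k (x - y) \<partial>lborel) = enn2real (\<integral>\<^sup>+z. ennreal (k z) \<partial>lborel)"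
    using k_nn by (subst integral_eq_nn_integral) (auto simp: eq1)
  finally show ?thesis .
qed

text \<open>For a non-measurable \<open>E\<close> the integrand is not integrable, so the Bochner integral is \<open>0\<close>:
  dividing by the positive measurable kernel would recover the indicator of \<open>E\<close>.\<close>
lemma conv_sign_indicator_nonmeasurable:
  fixes k :: "'a::euclidean_space \<Rightarrow> real"
  assumes k_pos: "\<And>z. k z > 0" and [measurable]: "k \<in> borel_measurable borel" and E: "E \<notin> sets borel"
  shows "conv k (\<lambda>y. indicator E y - indicator (UNIV - E) y) x = 0"
proof -
  let ?g = "\<lambda>y. indicator E y - indicator (UNIV - E) y :: real"
  have "\<not> integrable lborel (\<lambda>y. k (x - y) * ?g y)"
  proof
    assume "integrable lborel (\<lambda>y. k (x - y) * ?g y)"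
    then have [measurable]: "(\<lambda>y. k (x - y) * ?g y) \<in> borel_measurable borel" by auto
    have "(\<lambda>y. ((k (x - y) * ?g y) / k (x - y) + 1) / 2) \<in> borel_measurable borel" by measurable
    moreover have "(\<lambda>y. ((k (x - y) * ?g y) / k (x - y) + 1) / 2) = (indicator E :: 'a \<Rightarrow> real)"
      using k_pos[THEN less_imp_neq] by (auto simp: fun_eq_iff indicator_def)
    ultimately have "E \<in> sets borel" by (simp add: borel_measurable_indicator_iff)
    with E show False by simp
  qed
  then show ?thesis unfolding conv_def by (rule not_integrable_integral_eq)
qed

theorem corollary4p3:
  fixes Nn :: "'a::euclidean_space \<Rightarrow> real" and s h c :: real and E :: "'a set"
  assumes "aniso_norm Nn" and "0 < s" and "s < 1"
    and "convex E" and "0 < h"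
  shows "convex (Tset Nn s c h E)"
proof -
  note k = kerPh_pos[OF assms(1,2,5)] kerPh_measurable[OF assms(1,2,5)]
  show ?thesis
  proof (cases "E \<in> sets borel")
    case False
    then have "Tset Nn s c h E = {x. c * h powr (s / (1 + s)) < 0}"
      unfolding Tset_def using conv_sign_indicator_nonmeasurable[OF k] by simp
    then show ?thesis by (cases "c * h powr (s / (1 + s)) < 0") auto
  next
    case True
    let ?k = "kerPh Nn s h"
    define q where "q = (real DIM('a) + s) / real DIM('a)"
    have "q > 1" unfolding q_def using assms(2) by (simp add: field_simps)
    note \<rho> = tail_profile_props[OF this]
    have bound: "\<exists>C\<ge>0. \<forall>z. ?k z \<le> C * (\<Prod>b\<in>Basis. tail_profile q (z \<bullet> b))"
      unfolding q_def using kerPh_le_prod[OF assms(1,2,5)] .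
    define K where "K = enn2real (\<integral>\<^sup>+z. ennreal (?k z) \<partial>lborel)"
    have "Tset Nn s c h E = {x. (c * h powr (s / (1 + s)) + K) / 2 < kernel_mass ?k E x}"
      unfolding Tset_def K_def
        conv_sign_indicator_eq[OF less_imp_le[OF k(1)] k(2) nn_integral_kernel_finite[OF \<rho> k bound] True]
      by (auto simp: field_simps)
    also have "convex \<dots>"
      by (intro convex_superlevel kernel_mass_quasiconcave[OF \<rho> k bound]
          kerPh_power_mean_le[OF assms(1,2,5)] assms(4) True)
    finally show ?thesis .
  qed
qed

end
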